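(* With the notation of the context, for every $i\in\{1,\dots,n\}$: (1) if the indecomposable module $L(i,k)$ exists, then $0<k<2n$; (2) $\ell(P_i)=n+\inf\{r\in\mathbb{N}\mid\sigma^r(i)\in\Delta\}$; in particular $n\leqslant\ell(P_i)<2n$; (3) if $n\leqslant k<\ell(P_i)$, then $\ell(P_{\sigma^k(i)})=\ell(P_i)-(k-n)$; (4) if $0<k<\ell(P_i)$, then $\Omega(L(i,k))\cong L(\sigma^k(i),\ell(P_i)-k)$.
   Context: Let $K$ be a field, $n\geqslant2$, $Q$ the cyclic quiver with vertices $1,\dots,n$ and arrows $\alpha_i:i\to i+1$ ($1\leqslant i\leqslant n-1$), $\alpha_n:n\to1$, paths composed right to left. Let $\rho_1=\alpha_n\cdots\alpha_1$ and $\rho_i=\alpha_{i-1}\cdots\alpha_1\alpha_n\cdots\alpha_i$ for $2\leqslant i\leqslant n$. Fix $1\leqslant m\leqslant n$ and $\Delta=\{\lambda_1<\cdots<\lambda_m\}\subseteq\{1,\dots,n\}$, and let $A_{n,m}=KQ/\langle\rho_\lambda:\lambda\in\Delta\rangle$, with Jacobson radical $J$. Modules are finitely generated left $A_{n,m}$-modules. $e_i$ is the idempotent at vertex $i$, $P_i=A_{n,m}e_i$, $S_i=P_i/Je_i$. The Loewy length is $\ell(M)=\min\{s\geqslant1: J^sM=0\}$. $L(i,k)$ denotes the indecomposable module with top $S_i$ and Loewy length $k$ (i.e. $P_i/J^kP_i$ for $1\leqslant k\leqslant\ell(P_i)$). $\sigma$ is the permutation of $\{1,\dots,n\}$ with $\sigma(i)=i+1$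 for $i<n$ and $\sigma(n)=1$; $\sigma^r$ its $r$-th power, $\sigma^0=\mathrm{id}$. $\Omega(M)$ is the kernel of a projective cover of $M$. *)

theory Defs
  imports "HOL-Algebra.QuotRing" "HOL-Algebra.Module"
begin

definition sig :: "nat \<Rightarrow> nat \<Rightarrow> nat" where
  "sig n i = (if i < n then i + 1 else 1)"

text \<open>A path of the cyclic quiver is determined by its start vertex s in {1..n} and
  its length L (it ends at sigma^L(s)); the trivial path at s is (s,0) = e_s.
  An element of the path algebra KQ is a finitely supported K-linear combination
  of paths, i.e. a function (s,L) to K with finite support on {1..n} x N.
  Multiplication is the K-bilinear extension of concatenation, composed right to
  left: for paths p = (s,L1) and q = (sigma^L1 s, L2), q*p = (s, L1+L2).\<close>
type_synonym 'k pel = "nat \<times> nat \<Rightarrow> 'k"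

definition path_alg :: "nat \<Rightarrow> ('k::field) pel ring" where
  "path_alg n = \<lparr> carrier = {f. finite {p. f p \<noteq> 0} \<and> (\<forall>s L. f (s, L) \<noteq> 0 \<longrightarrow> s \<in> {1..n})},
      mult = (\<lambda>f g (s, L). \<Sum>L1\<le>L. f ((sig n ^^ L1) s, L - L1) * g (s, L1)),
      one = (\<lambda>(s, L). if s \<in> {1..n} \<and> L = 0 then 1 else 0),
      zero = (\<lambda>_. 0),
      add = (\<lambda>f g p. f p + g p) \<rparr>"

definition path_el :: "nat \<Rightarrow> nat \<Rightarrow> ('k::field) pel" where
  "path_el s L = (\<lambda>p. if p = (s, L) then 1 else 0)"

definition rho :: "nat \<Rightarrow> nat \<Rightarrow> ('k::field) pel" where
  "rho n lam = path_el lam n"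

definition rel_ideal :: "nat \<Rightarrow> nat set \<Rightarrow> ('k::field) pel set" where
  "rel_ideal n Delta = genideal (path_alg n) {rho n lam | lam. lam \<in> Delta}"

definition Aalg :: "nat \<Rightarrow> nat set \<Rightarrow> ('k::field) pel set ring" where
  "Aalg n Delta = (path_alg n) Quot (rel_ideal n Delta)"

definition idem :: "nat \<Rightarrow> nat set \<Rightarrow> nat \<Rightarrow> ('k::field) pel set" where
  "idem n Delta i = a_r_coset (path_alg n) (rel_ideal n Delta) (path_el i 0)"

definition left_module :: "'a ring \<Rightarrow> ('a, 'b) module \<Rightarrow> bool" where
  "left_module R M \<longleftrightarrow> ring R \<and> abelian_group M \<and>
     (\<forall>a\<in>carrier R. \<forall>x\<in>carrier M. smult M a x \<in> carrier M) \<and>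
     (\<forall>a\<in>carrier R. \<forall>b\<in>carrier R. \<forall>x\<in>carrier M.
        smult M (a \<oplus>\<^bsub>R\<^esub> b) x = smult M a x \<oplus>\<^bsub>M\<^esub> smult M b x) \<and>
     (\<forall>a\<in>carrier R. \<forall>x\<in>carrier M. \<forall>y\<in>carrier M.
        smult M a (x \<oplus>\<^bsub>M\<^esub> y) = smult M a x \<oplus>\<^bsub>M\<^esub> smult M a y) \<and>
     (\<forall>a\<in>carrier R. \<forall>b\<in>carrier R. \<forall>x\<in>carrier M.
        smult M (a \<otimes>\<^bsub>R\<^esub> b) x = smult M a (smult M b x)) \<and>
     (\<forall>x\<in>carrier M. smult M \<one>\<^bsub>R\<^esub> x = x)"

definition submod :: "'a ring \<Rightarrow> ('a, 'b) module \<Rightarrow> 'b set \<Rightarrow> bool" where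
  "submod R M N \<longleftrightarrow> N \<subseteq> carrier M \<and> additive_subgroup N M \<and>
     (\<forall>a\<in>carrier R. \<forall>x\<in>N. smult M a x \<in> N)"

definition submod_gen :: "'a ring \<Rightarrow> ('a, 'b) module \<Rightarrow> 'b set \<Rightarrow> 'b set" where
  "submod_gen R M S = \<Inter>{N. submod R M N \<and> S \<subseteq> N}"

definition fin_gen :: "'a ring \<Rightarrow> ('a, 'b) module \<Rightarrow> bool" where
  "fin_gen R M \<longleftrightarrow> (\<exists>S. finite S \<and> S \<subseteq> carrier M \<and> submod_gen R M S = carrier M)"

definition sub_module :: "('a, 'b) module \<Rightarrow> 'b set \<Rightarrow> ('a, 'b) module" where
  "sub_module M N = M\<lparr>carrier := N\<rparr>"

text \<open>Quotient module M/N (cosets N + x); the multiplicative fields are unused.\<close>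
definition quot_mod :: "('a, 'b) module \<Rightarrow> 'b set \<Rightarrow> ('a, 'b set) module" where
  "quot_mod M N = \<lparr> carrier = a_rcosets\<^bsub>M\<^esub> N, mult = (\<lambda>X Y. N), one = N, zero = N,
      add = set_add M, smult = (\<lambda>a X. set_add M N ((\<lambda>x. smult M a x) ` X)) \<rparr>"

definition mod_hom :: "'a ring \<Rightarrow> ('a, 'b) module \<Rightarrow> ('a, 'c) module \<Rightarrow> ('b \<Rightarrow> 'c) \<Rightarrow> bool" where
  "mod_hom R M N f \<longleftrightarrow> f \<in> carrier M \<rightarrow> carrier N \<and>
     (\<forall>x\<in>carrier M. \<forall>y\<in>carrier M. f (x \<oplus>\<^bsub>M\<^esub> y) = f x \<oplus>\<^bsub>N\<^esub> f y) \<and>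
     (\<forall>a\<in>carrier R. \<forall>x\<in>carrier M. f (smult M a x) = smult N a (f x))"

definition mod_iso :: "'a ring \<Rightarrow> ('a, 'b) module \<Rightarrow> ('a, 'c) module \<Rightarrow> bool" where
  "mod_iso R M N \<longleftrightarrow> (\<exists>f. mod_hom R M N f \<and> bij_betw f (carrier M) (carrier N))"

definition indecomp :: "'a ring \<Rightarrow> ('a, 'b) module \<Rightarrow> bool" where
  "indecomp R M \<longleftrightarrow> carrier M \<noteq> {\<zero>\<^bsub>M\<^esub>} \<and>
     (\<forall>N1 N2. submod R M N1 \<and> submod R M N2 \<and> N1 \<inter> N2 = {\<zero>\<^bsub>M\<^esub>} \<and>
        set_add M N1 N2 = carrier M \<longrightarrow> N1 = {\<zero>\<^bsub>M\<^esub>} \<or> N2 = {\<zero>\<^bsub>M\<^esub>})"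

definition left_ideal :: "'a ring \<Rightarrow> 'a set \<Rightarrow> bool" where
  "left_ideal R L \<longleftrightarrow> additive_subgroup L R \<and> (\<forall>a\<in>carrier R. \<forall>x\<in>L. a \<otimes>\<^bsub>R\<^esub> x \<in> L)"

definition max_left_ideal :: "'a ring \<Rightarrow> 'a set \<Rightarrow> bool" where
  "max_left_ideal R L \<longleftrightarrow> left_ideal R L \<and> L \<noteq> carrier R \<and>
     (\<forall>L'. left_ideal R L' \<and> L \<subseteq> L' \<and> L' \<noteq> carrier R \<longrightarrow> L' = L)"

definition jac :: "'a ring \<Rightarrow> 'a set" where
  "jac R = \<Inter>{L. max_left_ideal R L}"

fun rad_pow :: "'a ring \<Rightarrow> ('a, 'b) module \<Rightarrow> nat \<Rightarrow> 'b set" where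
  "rad_pow R M 0 = carrier M"
| "rad_pow R M (Suc s) =
     submod_gen R M {smult M a x | a x. a \<in> jac R \<and> x \<in> rad_pow R M s}"

definition loewy :: "'a ring \<Rightarrow> ('a, 'b) module \<Rightarrow> nat" where
  "loewy R M = (LEAST s. 1 \<le> s \<and> rad_pow R M s = {\<zero>\<^bsub>M\<^esub>})"

text \<open>HOL cannot quantify over
  all types inside a definition; we test modules whose carrier has type 'b => 'a,
  which contains a copy of the free module on carrier P (finitely supported
  functions carrier P -> R), so this is equivalent to the usual notion.\<close>
definition projective :: "'a ring \<Rightarrow> ('a, 'b) module \<Rightarrow> bool" where
  "projective R P \<longleftrightarrow> left_module R P \<and>
     (\<forall>(M :: ('a, 'b \<Rightarrow> 'a) module) g. left_module R M \<and> mod_hom R M P g \<and>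
        g ` carrier M = carrier P \<longrightarrow>
        (\<exists>h. mod_hom R P M h \<and> (\<forall>x\<in>carrier P. g (h x) = x)))"

definition mod_ker :: "('a, 'b) module \<Rightarrow> ('a, 'c) module \<Rightarrow> ('b \<Rightarrow> 'c) \<Rightarrow> 'b set" where
  "mod_ker P M p = {x \<in> carrier P. p x = \<zero>\<^bsub>M\<^esub>}"

definition superfluous :: "'a ring \<Rightarrow> ('a, 'b) module \<Rightarrow> 'b set \<Rightarrow> bool" where
  "superfluous R P K \<longleftrightarrow> submod R P K \<and>
     (\<forall>N. submod R P N \<and> set_add P N K = carrier P \<longrightarrow> N = carrier P)"

definition proj_cover :: "'a ring \<Rightarrow> ('a, 'b) module \<Rightarrow> ('a, 'c) module \<Rightarrow> ('b \<Rightarrow> 'c) \<Rightarrow> bool" where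
  "proj_cover R P M p \<longleftrightarrow> projective R P \<and> left_module R M \<and> mod_hom R P M p \<and>
     p ` carrier P = carrier M \<and> superfluous R P (mod_ker P M p)"

definition reg_mod :: "'a ring \<Rightarrow> ('a, 'a) module" where
  "reg_mod R = \<lparr> carrier = carrier R, mult = mult R, one = one R, zero = zero R,
      add = add R, smult = mult R \<rparr>"

definition Pmod :: "nat \<Rightarrow> nat set \<Rightarrow> nat \<Rightarrow> (('k::field) pel set, 'k pel set) module" where
  "Pmod n Delta i = sub_module (reg_mod (Aalg n Delta))
     {a \<otimes>\<^bsub>Aalg n Delta\<^esub> idem n Delta i | a. a \<in> carrier (Aalg n Delta)}"

definition Smod :: "nat \<Rightarrow> nat set \<Rightarrow> nat \<Rightarrow> (('k::field) pel set, 'k pel set set) module" where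
  "Smod n Delta i = quot_mod (Pmod n Delta i)
     {a \<otimes>\<^bsub>Aalg n Delta\<^esub> idem n Delta i | a. a \<in> jac (Aalg n Delta)}"

definition Lmod :: "nat \<Rightarrow> nat set \<Rightarrow> nat \<Rightarrow> nat \<Rightarrow> (('k::field) pel set, 'k pel set set) module" where
  "Lmod n Delta i k = quot_mod (Pmod n Delta i) (rad_pow (Aalg n Delta) (Pmod n Delta i) k)"

definition has_top :: "nat \<Rightarrow> nat set \<Rightarrow> nat \<Rightarrow> (('k::field) pel set, 'b) module \<Rightarrow> bool" where
  "has_top n Delta i M \<longleftrightarrow>
     mod_iso (Aalg n Delta) (quot_mod M (rad_pow (Aalg n Delta) M 1)) (Smod n Delta i)"

end

theory Submission
  imports Defs
begin

(*
  Elements of A are handled through normal forms: the K-linear combinations of the paths that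
  do not contain a relation rho_lambda. The path of length L from s survives iff
  L < n + r(s), where r(s) is the distance from s to Delta, and r(s) < n. The radical J is the
  span of the paths of positive length: these elements are nilpotent, and the left ideals of
  elements without e_s-coefficient are maximal. Hence J^t is spanned by the paths of length at
  least t; in particular J^(2n-1) = 0, which bounds the Loewy length of every module, and
  J^t P_i is spanned by the surviving paths from i of length at least t, so
  l(P_i) = n + r(i).

  For Omega(L(i,k)) with L(i,k) = P_i / J^k P_i, let p : P -> L(i,k) be a projective cover and
  y a preimage of the top e_i. The map x |-> x y from P_i to P is onto because ker p is
  superfluous, and it is injective because a section h of it produces the idempotent
  e_i - h(e_i y), which lies in J and therefore vanishes. So ker p is the image of J^k P_i,
  and right multiplication by the path of length k from i maps P_(sigma^k i) onto J^k P_i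
  with kernel J^(l(P_i)-k) P_(sigma^k i).
*)

section \<open>Left modules\<close>

lemma (in abelian_group) additive_subgroup_closedI:
  assumes "S \<subseteq> carrier G" "\<zero> \<in> S" "\<And>x y. x \<in> S \<Longrightarrow> y \<in> S \<Longrightarrow> x \<oplus> y \<in> S"
    "\<And>x. x \<in> S \<Longrightarrow> \<ominus> x \<in> S"
  shows "additive_subgroup S G"
  unfolding additive_subgroup_def
  by (rule subgroup.intro) (use assms in \<open>simp_all add: a_inv_def\<close>)

locale left_mod =
  fixes R :: "'a ring" and M :: "('a, 'b) module"
  assumes left_module: "left_module R M"
begin

sublocale R: ring R
  using left_module by (simp add: left_module_def)

sublocale M: abelian_group M
  using left_module by (simp add: left_module_def)

lemma smult_closed [simp]: "a \<in> carrier R \<Longrightarrow> x \<in> carrier M \<Longrightarrow> smult M a x \<in> carrier M"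
  using left_module by (simp add: left_module_def)

lemma smult_l_distr:
  "a \<in> carrier R \<Longrightarrow> b \<in> carrier R \<Longrightarrow> x \<in> carrier M \<Longrightarrow>
    smult M (a \<oplus>\<^bsub>R\<^esub> b) x = smult M a x \<oplus>\<^bsub>M\<^esub> smult M b x"
  using left_module by (simp add: left_module_def)

lemma smult_r_distr:
  "a \<in> carrier R \<Longrightarrow> x \<in> carrier M \<Longrightarrow> y \<in> carrier M \<Longrightarrow>
    smult M a (x \<oplus>\<^bsub>M\<^esub> y) = smult M a x \<oplus>\<^bsub>M\<^esub> smult M a y"
  using left_module by (simp add: left_module_def)

lemma smult_assoc:
  "a \<in> carrier R \<Longrightarrow> b \<in> carrier R \<Longrightarrow> x \<in> carrier M \<Longrightarrow>
    smult M (a \<otimes>\<^bsub>R\<^esub> b) x = smult M a (smult M b x)"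
  using left_module by (simp add: left_module_def)

lemma smult_one [simp]: "x \<in> carrier M \<Longrightarrow> smult M \<one>\<^bsub>R\<^esub> x = x"
  using left_module by (simp add: left_module_def)

lemma smult_additive: "a \<in> carrier R \<Longrightarrow> abelian_group_hom M M (smult M a)"
  by (intro abelian_group_homI M.abelian_group_axioms group_hom.intro group_hom_axioms.intro
      M.a_group homI) (simp_all add: smult_r_distr)

lemma smult_r_zero [simp]: "a \<in> carrier R \<Longrightarrow> smult M a \<zero>\<^bsub>M\<^esub> = \<zero>\<^bsub>M\<^esub>"
  using abelian_group_hom.hom_zero[OF smult_additive] .

lemma smult_r_minus:
  "a \<in> carrier R \<Longrightarrow> x \<in> carrier M \<Longrightarrow> smult M a (\<ominus>\<^bsub>M\<^esub> x) = \<ominus>\<^bsub>M\<^esub> smult M a x"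
  using abelian_group_hom.hom_a_inv[OF smult_additive] .

lemma smult_l_additive: "x \<in> carrier M \<Longrightarrow> abelian_group_hom R M (\<lambda>a. smult M a x)"
  by (intro abelian_group_homI R.abelian_group_axioms M.abelian_group_axioms group_hom.intro
      group_hom_axioms.intro R.a_group M.a_group homI) (simp_all add: smult_l_distr)

lemma smult_l_zero [simp]: "x \<in> carrier M \<Longrightarrow> smult M \<zero>\<^bsub>R\<^esub> x = \<zero>\<^bsub>M\<^esub>"
  using abelian_group_hom.hom_zero[OF smult_l_additive] .

end

lemma mod_hom_additive:
  assumes "abelian_group M" "abelian_group N" "mod_hom R M N f"
  shows "abelian_group_hom M N f"
  using assms
  by (intro abelian_group_homI group_hom.intro group_hom_axioms.intro abelian_group.a_group homI)
     (auto simp: mod_hom_def)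

lemma (in left_mod) submod_abelian_subgroup: "submod R M N \<Longrightarrow> abelian_subgroup N M"
  by (intro abelian_subgroupI3 M.abelian_group_axioms) (simp add: submod_def)

lemma (in left_mod) left_module_sub_module:
  assumes "submod R M N" shows "left_module R (sub_module M N)"
proof -
  interpret N: additive_subgroup N M using assms by (simp add: submod_def)
  have "abelian_group (M\<lparr>carrier := N\<rparr>)"
  proof (rule abelian_groupI; simp)
    fix x assume "x \<in> N"
    then show "\<exists>y\<in>N. y \<oplus>\<^bsub>M\<^esub> x = \<zero>\<^bsub>M\<^esub>"
      using N.a_subset by (intro bexI[of _ "\<ominus>\<^bsub>M\<^esub> x"]) (auto simp: M.l_neg)
  qed (use N.a_subset in \<open>auto simp: M.a_ac\<close>)
  then show ?thesis
    using assms N.a_subset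
    by (auto simp: left_module_def sub_module_def submod_def smult_l_distr smult_r_distr smult_assoc
        R.ring_axioms)
qed

lemma (in left_mod) submod_sub_module:
  assumes N: "submod R M N" and K: "submod R M K" "K \<subseteq> N"
  shows "submod R (sub_module M N) K"
proof -
  interpret MN: left_mod R "sub_module M N" by (rule left_mod.intro[OF left_module_sub_module[OF N]])
  interpret N: additive_subgroup N M using N by (simp add: submod_def)
  interpret K: additive_subgroup K M using K by (simp add: submod_def)
  have minus: "\<ominus>\<^bsub>sub_module M N\<^esub> x = \<ominus>\<^bsub>M\<^esub> x" if "x \<in> N" for x
    using that N.a_subset by (intro MN.M.minus_equality) (auto simp: sub_module_def M.l_neg)
  have "additive_subgroup K (sub_module M N)"
    using K(2) K.a_subset minus[unfolded sub_module_def]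
    by (intro MN.M.additive_subgroup_closedI) (auto simp: sub_module_def subset_iff)
  then show ?thesis using K K.a_subset by (auto simp: submod_def sub_module_def)
qed

lemma left_module_reg_mod:
  assumes "ring R" shows "left_module R (reg_mod R)"
proof -
  interpret ring R by fact
  have "abelian_group (reg_mod R)"
    by (rule abelian_groupI) (auto simp: reg_mod_def a_ac intro: l_neg)
  then show ?thesis
    by (simp add: left_module_def reg_mod_def ring_axioms l_distr r_distr m_assoc)
qed

lemma reg_mod_simps [simp]:
  "carrier (reg_mod R) = carrier R" "\<zero>\<^bsub>reg_mod R\<^esub> = \<zero>\<^bsub>R\<^esub>"
  "x \<oplus>\<^bsub>reg_mod R\<^esub> y = x \<oplus>\<^bsub>R\<^esub> y" "smult (reg_mod R) = mult R"
  by (simp_all add: reg_mod_def)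

lemma submod_reg_mod:
  assumes R: "ring R" and S: "left_ideal R S" shows "submod R (reg_mod R) S"
proof -
  interpret R: ring R by (rule R)
  interpret RM: left_mod R "reg_mod R" by (rule left_mod.intro[OF left_module_reg_mod[OF R]])
  interpret S: additive_subgroup S R using S by (simp add: left_ideal_def)
  have minus: "\<ominus>\<^bsub>reg_mod R\<^esub> x = \<ominus>\<^bsub>R\<^esub> x" if "x \<in> carrier R" for x
    using that by (intro RM.M.minus_equality) (simp_all add: R.l_neg)
  have "additive_subgroup S (reg_mod R)"
    using S.a_subset
    by (intro RM.M.additive_subgroup_closedI) (auto simp: reg_mod_simps minus subset_iff)
  then show ?thesis
    using S S.a_subset by (auto simp: submod_def left_ideal_def)
qed

lemma left_module_left_ideal:
  "ring R \<Longrightarrow> left_ideal R S \<Longrightarrow> left_module R (sub_module (reg_mod R) S)"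
  by (intro left_mod.left_module_sub_module left_mod.intro left_module_reg_mod submod_reg_mod)
    assumption+

lemma left_ideal_Int:
  assumes "ring R" "left_ideal R I" "left_ideal R J"
  shows "left_ideal R (I \<inter> J)"
proof -
  interpret R: ring R by fact
  have "subgroup (I \<inter> J) (add_monoid R)"
    using assms(2,3) by (intro R.add.subgroups_Inter_pair) (simp_all add: left_ideal_def additive_subgroup_def)
  then show ?thesis using assms(2,3) by (simp add: left_ideal_def additive_subgroup_def)
qed

lemma (in left_mod) submod_image:
  assumes Y: "left_module R Y" and f: "mod_hom R M Y f"
  shows "submod R Y (f ` carrier M)"
proof -
  interpret f: abelian_group_hom M Y f
    using Y by (intro mod_hom_additive[OF M.abelian_group_axioms _ f]) (simp add: left_module_def)
  have "subgroup (f ` carrier M) (add_monoid Y)"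
    by (rule group_hom.img_is_subgroup[OF f.a_group_hom, simplified])
  moreover have "smult Y a v \<in> f ` carrier M" if a: "a \<in> carrier R" and v: "v \<in> f ` carrier M" for a v
  proof -
    obtain x where "x \<in> carrier M" "v = f x" using v by blast
    then have "smult Y a v = f (smult M a x)" using f a by (simp add: mod_hom_def)
    then show ?thesis using \<open>x \<in> carrier M\<close> a by simp
  qed
  ultimately show ?thesis
    using f.hom_closed by (auto simp: submod_def additive_subgroup_def)
qed

lemma quot_mod_simps:
  "carrier (quot_mod M N) = a_rcosets\<^bsub>M\<^esub> N"
  "\<zero>\<^bsub>quot_mod M N\<^esub> = N"
  "x \<oplus>\<^bsub>quot_mod M N\<^esub> y = x <+>\<^bsub>M\<^esub> y"
  by (simp_all add: quot_mod_def)

context left_mod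
begin

lemma quot_mod_add:
  "submod R M N \<Longrightarrow> x \<in> carrier M \<Longrightarrow> y \<in> carrier M \<Longrightarrow>
    (N +>\<^bsub>M\<^esub> x) \<oplus>\<^bsub>quot_mod M N\<^esub> (N +>\<^bsub>M\<^esub> y) = N +>\<^bsub>M\<^esub> (x \<oplus>\<^bsub>M\<^esub> y)"
  by (simp add: quot_mod_simps abelian_subgroup.a_rcos_sum submod_abelian_subgroup)

lemma quot_mod_smult:
  assumes N: "submod R M N" and a: "a \<in> carrier R" and x: "x \<in> carrier M"
  shows "smult (quot_mod M N) a (N +>\<^bsub>M\<^esub> x) = N +>\<^bsub>M\<^esub> smult M a x"
proof -
  interpret N: abelian_subgroup N M by (rule submod_abelian_subgroup[OF N])
  have Nsm: "h \<in> N \<Longrightarrow> smult M a h \<in> N" for h using N a by (simp add: submod_def)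
  have img: "smult M a ` (N +>\<^bsub>M\<^esub> x) \<subseteq> N +>\<^bsub>M\<^esub> smult M a x"
  proof
    fix v assume "v \<in> smult M a ` (N +>\<^bsub>M\<^esub> x)"
    then obtain h where h: "h \<in> N" "v = smult M a (h \<oplus>\<^bsub>M\<^esub> x)"
      unfolding a_r_coset_def' by blast
    then have "v = smult M a h \<oplus>\<^bsub>M\<^esub> smult M a x"
      using a x N.a_subset by (simp add: smult_r_distr subset_iff)
    then show "v \<in> N +>\<^bsub>M\<^esub> smult M a x"
      using Nsm[OF h(1)] unfolding a_r_coset_def' by blast
  qed
  have "N <+>\<^bsub>M\<^esub> smult M a ` (N +>\<^bsub>M\<^esub> x) = N +>\<^bsub>M\<^esub> smult M a x"
  proof
    have "N <+>\<^bsub>M\<^esub> smult M a ` (N +>\<^bsub>M\<^esub> x) \<subseteq> N <+>\<^bsub>M\<^esub> (N +>\<^bsub>M\<^esub> smult M a x)"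
      using img unfolding set_add_def' by blast
    also have "\<dots> = N +>\<^bsub>M\<^esub> smult M a x"
      using a x N.a_subset by (intro N.rcosets_add_eq M.a_rcosetsI) simp_all
    finally show "N <+>\<^bsub>M\<^esub> smult M a ` (N +>\<^bsub>M\<^esub> x) \<subseteq> N +>\<^bsub>M\<^esub> smult M a x" .
    have "smult M a x \<in> smult M a ` (N +>\<^bsub>M\<^esub> x)"
      using x N.a_rcos_self by simp
    then show "N +>\<^bsub>M\<^esub> smult M a x \<subseteq> N <+>\<^bsub>M\<^esub> smult M a ` (N +>\<^bsub>M\<^esub> x)"
      unfolding a_r_coset_def' set_add_def' by blast
  qed
  then show ?thesis by (simp add: quot_mod_def)
qed

lemma coset_eq_iff:
  assumes "submod R M N" "x \<in> carrier M" "y \<in> carrier M"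
  shows "N +>\<^bsub>M\<^esub> x = N +>\<^bsub>M\<^esub> y \<longleftrightarrow> x \<oplus>\<^bsub>M\<^esub> \<ominus>\<^bsub>M\<^esub> y \<in> N"
proof -
  interpret N: abelian_subgroup N M by (rule submod_abelian_subgroup[OF assms(1)])
  have "N +>\<^bsub>M\<^esub> x = N +>\<^bsub>M\<^esub> y \<longleftrightarrow> x \<in> N +>\<^bsub>M\<^esub> y"
  proof
    assume "N +>\<^bsub>M\<^esub> x = N +>\<^bsub>M\<^esub> y"
    then show "x \<in> N +>\<^bsub>M\<^esub> y" by (rule N.a_repr_independenceD[OF assms(2) sym])
  next
    assume "x \<in> N +>\<^bsub>M\<^esub> y"
    then show "N +>\<^bsub>M\<^esub> x = N +>\<^bsub>M\<^esub> y" by (rule sym[OF N.a_repr_independence'[OF _ assms(3)]])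
  qed
  also have "\<dots> \<longleftrightarrow> x \<oplus>\<^bsub>M\<^esub> \<ominus>\<^bsub>M\<^esub> y \<in> N"
    by (rule N.a_rcos_module[OF assms(3,2)])
  finally show ?thesis .
qed

lemma coset_eq_zero_iff:
  assumes "submod R M N" "x \<in> carrier M"
  shows "N +>\<^bsub>M\<^esub> x = N \<longleftrightarrow> x \<in> N"
proof -
  interpret N: abelian_subgroup N M by (rule submod_abelian_subgroup[OF assms(1)])
  show ?thesis
  proof
    assume "N +>\<^bsub>M\<^esub> x = N"
    then show "x \<in> N" using N.a_rcos_self[OF assms(2)] by simp
  qed (rule N.a_rcos_const)
qed

lemma submod_mod_ker:
  assumes Y: "left_module R Y" and f: "mod_hom R M Y f"
  shows "submod R M (mod_ker M Y f)"
proof -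
  have "abelian_group_hom M Y f"
    using Y by (intro mod_hom_additive[OF M.abelian_group_axioms _ f]) (simp add: left_module_def)
  then have "additive_subgroup (mod_ker M Y f) M"
    unfolding mod_ker_def a_kernel_def'[symmetric] by (rule abelian_group_hom.additive_subgroup_a_kernel)
  moreover have "smult M a x \<in> mod_ker M Y f" if "a \<in> carrier R" "x \<in> mod_ker M Y f" for a x
  proof -
    have "f (smult M a x) = smult Y a \<zero>\<^bsub>Y\<^esub>"
      using that f by (simp add: mod_ker_def mod_hom_def)
    also have "\<dots> = \<zero>\<^bsub>Y\<^esub>"
      using that(1) left_mod.smult_r_zero[OF left_mod.intro[OF Y]] by blast
    finally show ?thesis using that by (simp add: mod_ker_def)
  qed
  ultimately show ?thesis by (simp add: submod_def mod_ker_def)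
qed


lemma coset_mod_ker_eq_iff:
  assumes Y: "left_module R Y" and f: "mod_hom R M Y f" and x: "x \<in> carrier M" "x' \<in> carrier M"
  shows "mod_ker M Y f +>\<^bsub>M\<^esub> x = mod_ker M Y f +>\<^bsub>M\<^esub> x' \<longleftrightarrow> f x = f x'"
proof -
  interpret Y: left_mod R Y by (rule left_mod.intro[OF Y])
  interpret f: abelian_group_hom M Y f
    by (rule mod_hom_additive[OF M.abelian_group_axioms Y.M.abelian_group_axioms f])
  have "f (x \<oplus>\<^bsub>M\<^esub> \<ominus>\<^bsub>M\<^esub> x') = f x \<oplus>\<^bsub>Y\<^esub> \<ominus>\<^bsub>Y\<^esub> f x'" using x by simp
  moreover have "f x \<oplus>\<^bsub>Y\<^esub> \<ominus>\<^bsub>Y\<^esub> f x' = \<zero>\<^bsub>Y\<^esub> \<longleftrightarrow> f x = f x'"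
    using x by (metis Y.M.minus_equality Y.M.minus_minus Y.M.r_neg Y.M.a_inv_closed f.hom_closed)
  ultimately show ?thesis
    using coset_eq_iff[OF submod_mod_ker[OF Y f] x] x by (simp add: mod_ker_def)
qed

end

theorem mod_iso_quot_mod_ker:
  assumes X: "left_module R X" and Y: "left_module R Y"
    and f: "mod_hom R X Y f" and onto: "f ` carrier X = carrier Y"
  shows "mod_iso R Y (quot_mod X (mod_ker X Y f))"
proof -
  interpret X: left_mod R X by (rule left_mod.intro[OF X])
  interpret Y: left_mod R Y by (rule left_mod.intro[OF Y])
  interpret f: abelian_group_hom X Y f
    by (rule mod_hom_additive[OF X.M.abelian_group_axioms Y.M.abelian_group_axioms f])
  define K where "K = mod_ker X Y f"
  have K: "submod R X K" unfolding K_def by (rule X.submod_mod_ker[OF Y f])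
  have f_smult: "f (smult X a x) = smult Y a (f x)" if "a \<in> carrier R" "x \<in> carrier X" for a x
    using f that by (simp add: mod_hom_def)
  have coset_eq: "K +>\<^bsub>X\<^esub> x = K +>\<^bsub>X\<^esub> x' \<longleftrightarrow> f x = f x'"
    if "x \<in> carrier X" "x' \<in> carrier X" for x x'
    unfolding K_def by (rule X.coset_mod_ker_eq_iff[OF Y f that])
  define g where "g y = K +>\<^bsub>X\<^esub> inv_into (carrier X) f y" for y
  have g_f: "g (f x) = K +>\<^bsub>X\<^esub> x" if "x \<in> carrier X" for x
    using that coset_eq[of "inv_into (carrier X) f (f x)" x]
    by (simp add: g_def inv_into_into f_inv_into_f)
  have preimage: "\<exists>x\<in>carrier X. y = f x" if "y \<in> carrier Y" for y
    using that onto by blast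
  have g_closed: "g \<in> carrier Y \<rightarrow> carrier (quot_mod X K)"
    using preimage g_f by (force simp: quot_mod_simps A_RCOSETS_def')
  have "mod_hom R Y (quot_mod X K) g"
    unfolding mod_hom_def
  proof (intro conjI ballI g_closed)
    fix y y' assume "y \<in> carrier Y" "y' \<in> carrier Y"
    then obtain x x' where "x \<in> carrier X" "x' \<in> carrier X" "y = f x" "y' = f x'"
      using preimage by metis
    then show "g (y \<oplus>\<^bsub>Y\<^esub> y') = g y \<oplus>\<^bsub>quot_mod X K\<^esub> g y'"
      by (simp add: g_f X.quot_mod_add[OF K] flip: f.hom_add)
  next
    fix a y assume a: "a \<in> carrier R" and "y \<in> carrier Y"
    then obtain x where "x \<in> carrier X" "y = f x"
      using preimage by metis
    then show "g (smult Y a y) = smult (quot_mod X K) a (g y)"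
      using a by (simp add: g_f X.quot_mod_smult[OF K] flip: f_smult)
  qed
  moreover have "inj_on g (carrier Y)"
  proof
    fix y y' assume "y \<in> carrier Y" "y' \<in> carrier Y" "g y = g y'"
    then show "y = y'" using preimage g_f coset_eq by metis
  qed
  moreover have "g ` carrier Y = carrier (quot_mod X K)"
  proof
    show "g ` carrier Y \<subseteq> carrier (quot_mod X K)" using g_closed by blast
    show "carrier (quot_mod X K) \<subseteq> g ` carrier Y"
      using g_f by (force simp: quot_mod_simps A_RCOSETS_def')
  qed
  ultimately show ?thesis unfolding mod_iso_def bij_betw_def K_def by blast
qed

(* The definition of projective only tests modules whose carrier has type 'b => 'a; const_copy
   is a copy of a left ideal of that type, carried by constant functions. *)
definition const_copy :: "'a ring \<Rightarrow> 'a set \<Rightarrow> 'b \<Rightarrow> ('a, 'b \<Rightarrow> 'a) module" where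
  "const_copy R S u = \<lparr>carrier = (\<lambda>x _. x) ` S, mult = (\<lambda>a b. a), one = (\<lambda>_. \<zero>\<^bsub>R\<^esub>),
     zero = (\<lambda>_. \<zero>\<^bsub>R\<^esub>), add = (\<lambda>a b _. a u \<oplus>\<^bsub>R\<^esub> b u), smult = (\<lambda>r a _. r \<otimes>\<^bsub>R\<^esub> a u)\<rparr>"

lemma left_module_const_copy:
  assumes R: "ring R" and S: "left_ideal R S"
  shows "left_module R (const_copy R S u)"
proof -
  interpret R: ring R by (rule R)
  interpret S: additive_subgroup S R using S by (simp add: left_ideal_def)
  have S_mult: "a \<in> carrier R \<Longrightarrow> x \<in> S \<Longrightarrow> a \<otimes>\<^bsub>R\<^esub> x \<in> S" for a x
    using S by (simp add: left_ideal_def)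
  have S_car: "x \<in> S \<Longrightarrow> x \<in> carrier R" for x using S.a_subset by blast
  have "abelian_group (const_copy R S u)"
  proof (rule abelian_groupI)
    fix x assume "x \<in> carrier (const_copy R S u)"
    then obtain s where "s \<in> S" "x = (\<lambda>_. s)" by (auto simp: const_copy_def)
    then show "\<exists>y\<in>carrier (const_copy R S u). y \<oplus>\<^bsub>const_copy R S u\<^esub> x = \<zero>\<^bsub>const_copy R S u\<^esub>"
      by (intro bexI[of _ "\<lambda>_. \<ominus>\<^bsub>R\<^esub> s"]) (auto simp: const_copy_def S_car R.l_neg)
  qed (auto simp: const_copy_def S_car R.a_assoc R.a_comm R.a_lcomm)
  then show ?thesis
    unfolding left_module_def
    by (intro conjI ballI R) (auto simp: const_copy_def S_mult S_car R.l_distr R.r_distr R.m_assoc)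
qed

lemma projective_section_left_ideal:
  fixes P :: "('a, 'b) module"
  assumes P: "projective R P" and S: "left_ideal R S"
    and f: "mod_hom R (sub_module (reg_mod R) S) P f" and onto: "f ` S = carrier P"
  obtains h where "mod_hom R P (sub_module (reg_mod R) S) h" "\<And>z. z \<in> carrier P \<Longrightarrow> f (h z) = z"
proof -
  have R: "ring R" using P by (simp add: projective_def left_module_def)
  define M where "M = const_copy R S (undefined :: 'b)"
  have M_car: "carrier M = (\<lambda>x _. x) ` S" by (simp add: M_def const_copy_def)
  have M_ops: "\<phi> \<oplus>\<^bsub>M\<^esub> \<psi> = (\<lambda>_. \<phi> undefined \<oplus>\<^bsub>R\<^esub> \<psi> undefined)"
    "smult M a \<phi> = (\<lambda>_. a \<otimes>\<^bsub>R\<^esub> \<phi> undefined)" for \<phi> \<psi> a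
    by (simp_all add: M_def const_copy_def)
  have f_hom: "f \<in> S \<rightarrow> carrier P"
    "\<And>x y. x \<in> S \<Longrightarrow> y \<in> S \<Longrightarrow> f (x \<oplus>\<^bsub>R\<^esub> y) = f x \<oplus>\<^bsub>P\<^esub> f y"
    "\<And>a x. a \<in> carrier R \<Longrightarrow> x \<in> S \<Longrightarrow> f (a \<otimes>\<^bsub>R\<^esub> x) = smult P a (f x)"
    using f by (simp_all add: mod_hom_def sub_module_def)
  have "mod_hom R M P (\<lambda>\<phi>. f (\<phi> undefined))"
    using f_hom unfolding mod_hom_def M_car M_ops by auto
  moreover have "(\<lambda>\<phi>. f (\<phi> undefined)) ` carrier M = carrier P"
    using onto unfolding M_car by (simp add: image_image)
  moreover have "left_module R M" unfolding M_def by (rule left_module_const_copy[OF R S])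
  ultimately obtain k where k: "mod_hom R P M k" "\<And>z. z \<in> carrier P \<Longrightarrow> f (k z undefined) = z"
    using P unfolding projective_def by (elim conjE allE[of _ M] allE[of _ "\<lambda>\<phi>. f (\<phi> undefined)"]) blast
  have "mod_hom R P (sub_module (reg_mod R) S) (\<lambda>z. k z undefined)"
    using k(1) unfolding mod_hom_def M_car M_ops by (force simp: sub_module_def)
  then show ?thesis using k(2) that by blast
qed

section \<open>Nilpotency, the Jacobson radical and Loewy length\<close>

lemma (in ring) nilpotent_idempotent_eq_zero:
  assumes "j \<in> carrier R" "j \<otimes> j = j" "j [^] (N :: nat) = \<zero>"
  shows "j = \<zero>"
proof -
  have "j [^] Suc m = j" for m
    by (induction m) (use assms(1,2) in simp_all)
  show ?thesis
  proof (cases N)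
    case 0
    then have "\<one> = \<zero>" using assms(3) by simp
    then show ?thesis using assms(1) by (metis r_one r_null)
  next
    case (Suc m)
    then show ?thesis using \<open>j [^] Suc m = j\<close> assms(3) by simp
  qed
qed

context
  fixes R :: "'a ring" (structure)
  assumes R: "ring R"
begin

interpretation ring R by (rule R)

lemma left_ideal_add_multiples:
  assumes L: "left_ideal R L" and x: "x \<in> carrier R"
  shows "left_ideal R {l \<oplus> a \<otimes> x | l a. l \<in> L \<and> a \<in> carrier R}" (is "left_ideal R ?L'")
proof -
  interpret L: additive_subgroup L R using L by (simp add: left_ideal_def)
  have L_mult: "a \<in> carrier R \<Longrightarrow> l \<in> L \<Longrightarrow> a \<otimes> l \<in> L" for a l
    using L by (simp add: left_ideal_def)
  have L_car: "l \<in> L \<Longrightarrow> l \<in> carrier R" for l using L.a_subset by blast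
  have "additive_subgroup ?L' R"
  proof (rule additive_subgroup_closedI)
    show "?L' \<subseteq> carrier R" using x L_car by blast
    show "\<zero> \<in> ?L'" using x by (intro CollectI exI[of _ \<zero>]) auto
  next
    fix u v assume "u \<in> ?L'" "v \<in> ?L'"
    then obtain l a l' a' where "u = l \<oplus> a \<otimes> x" "v = l' \<oplus> a' \<otimes> x"
      and "l \<in> L" "l' \<in> L" "a \<in> carrier R" "a' \<in> carrier R" by blast
    moreover from this have "u \<oplus> v = (l \<oplus> l') \<oplus> (a \<oplus> a') \<otimes> x"
      using x by (simp add: L_car l_distr a_ac)
    ultimately show "u \<oplus> v \<in> ?L'" by blast
  next
    fix u assume "u \<in> ?L'"
    then obtain l a where "u = l \<oplus> a \<otimes> x" "l \<in> L" "a \<in> carrier R" by blast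
    moreover from this have "\<ominus> u = \<ominus> l \<oplus> (\<ominus> a) \<otimes> x"
      using x by (simp add: L_car minus_add l_minus)
    ultimately show "\<ominus> u \<in> ?L'" by blast
  qed
  moreover have "b \<otimes> u \<in> ?L'" if b: "b \<in> carrier R" and u: "u \<in> ?L'" for b u
  proof -
    obtain l a where "u = l \<oplus> a \<otimes> x" "l \<in> L" "a \<in> carrier R" using u by blast
    moreover from this have "b \<otimes> u = b \<otimes> l \<oplus> (b \<otimes> a) \<otimes> x"
      using x b by (simp add: L_car r_distr m_assoc)
    ultimately show ?thesis using b L_mult by blast
  qed
  ultimately show ?thesis by (simp add: left_ideal_def)
qed

lemma left_nilpotent_in_max_left_ideal:
  assumes L: "max_left_ideal R L" and x: "x \<in> carrier R"
    and nil: "\<And>a. a \<in> carrier R \<Longrightarrow> \<exists>N::nat. (a \<otimes> x) [^] N = \<zero>"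
  shows "x \<in> L"
proof (rule ccontr)
  assume "x \<notin> L"
  have L_ideal: "left_ideal R L" and L_proper: "L \<noteq> carrier R"
    using L by (simp_all add: max_left_ideal_def)
  interpret L: additive_subgroup L R using L_ideal by (simp add: left_ideal_def)
  have L_mult: "a \<in> carrier R \<Longrightarrow> l \<in> L \<Longrightarrow> a \<otimes> l \<in> L" for a l
    using L_ideal by (simp add: left_ideal_def)
  define L' where "L' = {l \<oplus> a \<otimes> x | l a. l \<in> L \<and> a \<in> carrier R}"
  have "left_ideal R L'" unfolding L'_def by (rule left_ideal_add_multiples[OF L_ideal x])
  moreover have "L \<subseteq> L'"
    unfolding L'_def using x L.a_subset by (force intro: exI[of _ \<zero>])
  moreover have "x \<in> L'"
    unfolding L'_def using x by (force intro: exI[of _ \<zero>] exI[of _ \<one>])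
  ultimately have "L' = carrier R"
    using L \<open>x \<notin> L\<close> unfolding max_left_ideal_def by blast
  then obtain l a where la: "\<one> = l \<oplus> a \<otimes> x" "l \<in> L" "a \<in> carrier R"
    unfolding L'_def using one_closed by blast
  define y where "y = a \<otimes> x"
  have y: "y \<in> carrier R" using la(3) x by (simp add: y_def)
  \<comment> \<open>l = 1 - y with y nilpotent, and L contains every 1 - y^m\<close>
  have l: "l = \<one> \<ominus> y"
    using la L.a_subset y by (simp add: y_def a_minus_def) (metis add.inv_solve_right one_closed subsetD)
  have "\<one> \<ominus> y [^] m \<in> L" for m :: nat
  proof (induction m)
    case 0 then show ?case by (simp add: r_neg a_minus_def)
  next
    case (Suc m)
    have "\<one> \<ominus> y [^] Suc m = (\<one> \<ominus> y [^] m) \<oplus> y [^] m \<otimes> l"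
      using y by (simp add: l a_minus_def r_distr r_minus a_assoc r_neg1)
    then show ?case using Suc la(2) y L_mult by simp
  qed
  moreover obtain N :: nat where "y [^] N = \<zero>" using nil[OF la(3)] unfolding y_def by blast
  ultimately have "\<one> \<in> L" by (metis a_minus_def minus_zero one_closed r_zero)
  then have "carrier R \<subseteq> L" using L_mult by (metis r_one subsetI)
  then show False using L_proper L.a_subset by blast
qed

lemma nil_left_ideal_subset_jac:
  assumes I: "left_ideal R I" and nil: "\<And>y. y \<in> I \<Longrightarrow> \<exists>N::nat. y [^] N = \<zero>"
  shows "I \<subseteq> jac R"
proof
  fix x assume "x \<in> I"
  then have x: "x \<in> carrier R" and "\<And>a. a \<in> carrier R \<Longrightarrow> a \<otimes> x \<in> I"
    using I additive_subgroup.a_subset by (auto simp: left_ideal_def)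
  then have "\<And>a. a \<in> carrier R \<Longrightarrow> \<exists>N::nat. (a \<otimes> x) [^] N = \<zero>" using nil by blast
  then show "x \<in> jac R"
    unfolding jac_def using left_nilpotent_in_max_left_ideal[OF _ x] by blast
qed

end

lemma (in left_mod) zero_in_rad_pow: "\<zero>\<^bsub>M\<^esub> \<in> rad_pow R M s"
proof (cases s)
  case (Suc t)
  have "\<zero>\<^bsub>M\<^esub> \<in> N" if "submod R M N" for N
    using that additive_subgroup.zero_closed by (auto simp: submod_def)
  then show ?thesis using Suc by (simp add: submod_gen_def)
qed simp

lemma (in left_mod) submod_annihilator:
  assumes C: "C \<subseteq> carrier R" and C_mult: "\<And>c a. c \<in> C \<Longrightarrow> a \<in> carrier R \<Longrightarrow> c \<otimes>\<^bsub>R\<^esub> a \<in> C"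
  shows "submod R M {x \<in> carrier M. \<forall>c \<in> C. smult M c x = \<zero>\<^bsub>M\<^esub>}"
  unfolding submod_def
proof (intro conjI ballI)
  have C_elem: "c \<in> C \<Longrightarrow> c \<in> carrier R" for c using C by blast
  show "additive_subgroup {x \<in> carrier M. \<forall>c \<in> C. smult M c x = \<zero>\<^bsub>M\<^esub>} M"
    by (rule M.additive_subgroup_closedI) (auto simp: C_elem smult_r_distr smult_r_minus)
  fix a x assume "a \<in> carrier R" "x \<in> {x \<in> carrier M. \<forall>c \<in> C. smult M c x = \<zero>\<^bsub>M\<^esub>}"
  then show "smult M a x \<in> {x \<in> carrier M. \<forall>c \<in> C. smult M c x = \<zero>\<^bsub>M\<^esub>}"
    using C_mult by (auto simp: C_elem simp flip: smult_assoc)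
qed auto

lemma (in left_mod) rad_pow_eq_zero_if_filtration:
  fixes F :: "nat \<Rightarrow> 'a set"
  assumes F_car: "\<And>t. F t \<subseteq> carrier R" and F_0: "F 0 = carrier R" and jac: "jac R \<subseteq> F 1"
    and F_mult: "\<And>a b x y. x \<in> F a \<Longrightarrow> y \<in> F b \<Longrightarrow> x \<otimes>\<^bsub>R\<^esub> y \<in> F (a + b)"
    and F_N: "F N = {\<zero>\<^bsub>R\<^esub>}"
  shows "rad_pow R M N = {\<zero>\<^bsub>M\<^esub>}"
proof -
  define X where "X s = {x \<in> carrier M. \<forall>c \<in> F (N - s). smult M c x = \<zero>\<^bsub>M\<^esub>}" for s
  have F_elem: "c \<in> F t \<Longrightarrow> c \<in> carrier R" for c t using F_car by blast
  have F_r_mult: "c \<otimes>\<^bsub>R\<^esub> a \<in> F t" if "c \<in> F t" "a \<in> carrier R" for c a t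
    using F_mult[of c t a 0] that F_0 by simp
  have X_submod: "submod R M (X s)" for s
    unfolding X_def by (rule submod_annihilator[OF F_car F_r_mult])
  have "rad_pow R M s \<subseteq> X s" if "s \<le> N" for s
    using that
  proof (induction s)
    case 0
    then show ?case using F_N by (auto simp: X_def)
  next
    case (Suc s)
    have "smult M a x \<in> X (Suc s)" if "a \<in> jac R" "x \<in> X s" for a x
    proof -
      have a: "a \<in> F 1" "a \<in> carrier R" using that(1) jac F_car by blast+
      have "c \<otimes>\<^bsub>R\<^esub> a \<in> F (N - s)" if "c \<in> F (N - Suc s)" for c
        using F_mult[OF that a(1)] Suc.prems by (simp add: Suc_diff_Suc)
      then show ?thesis
        using \<open>x \<in> X s\<close> a by (auto simp: X_def F_elem simp flip: smult_assoc)
    qed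
    moreover have "rad_pow R M s \<subseteq> X s" using Suc by simp
    ultimately have "{smult M a x | a x. a \<in> jac R \<and> x \<in> rad_pow R M s} \<subseteq> X (Suc s)"
      by blast
    then show ?case
      using X_submod[of "Suc s"] by (auto simp: submod_gen_def)
  qed
  then have "rad_pow R M N \<subseteq> X N" by simp
  also have "X N \<subseteq> {\<zero>\<^bsub>M\<^esub>}" using F_0 by (auto simp: X_def) (metis R.one_closed smult_one)
  finally show ?thesis using zero_in_rad_pow by blast
qed

lemma loewy_le:
  assumes "1 \<le> N" "rad_pow R M N = {\<zero>\<^bsub>M\<^esub>}"
  shows "0 < loewy R M" "loewy R M \<le> N"
  using assms LeastI[of "\<lambda>s. 1 \<le> s \<and> rad_pow R M s = {\<zero>\<^bsub>M\<^esub>}" N]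
    Least_le[of "\<lambda>s. 1 \<le> s \<and> rad_pow R M s = {\<zero>\<^bsub>M\<^esub>}" N]
  by (auto simp: loewy_def)

section \<open>The path algebra of the cyclic quiver\<close>

lemma sig_pow_Suc:
  assumes "a < n" shows "(sig n ^^ r) (Suc a) = Suc ((a + r) mod n)"
proof (induction r)
  case (Suc r)
  have "(a + r) mod n < n" using assms by simp
  then show ?case using Suc by (auto simp: sig_def mod_Suc)
qed (use assms in simp)

lemma sig_pow_in: "i \<in> {1..n} \<Longrightarrow> (sig n ^^ r) i \<in> {1..n}"
  by (cases i) (auto simp: sig_pow_Suc Suc_le_eq)

lemma sig_pow_n: "i \<in> {1..n} \<Longrightarrow> (sig n ^^ n) i = i"
  by (cases i) (auto simp: sig_pow_Suc)

lemma sig_pow_surj: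
  assumes "i \<in> {1..n}" "j \<in> {1..n}"
  shows "\<exists>r<n. (sig n ^^ r) i = j"
proof -
  obtain a b where ab: "i = Suc a" "j = Suc b" "a < n" "b < n"
    using assms by (cases i; cases j) auto
  define r where "r = (b + n - a) mod n"
  have "(a + r) mod n = (a + (b + n - a)) mod n" by (simp add: r_def mod_add_right_eq)
  also have "a + (b + n - a) = b + n" using ab by simp
  finally have "(a + r) mod n = b" using ab by simp
  moreover have "r < n" using ab by (simp add: r_def)
  ultimately show ?thesis using ab by (auto simp: sig_pow_Suc)
qed

lemma funpow_diff: "i \<le> k \<Longrightarrow> (f ^^ (k - i)) ((f ^^ i) x) = (f ^^ k) x"
  by (metis funpow_add le_add_diff_inverse2 o_apply)

definition pmul :: "nat \<Rightarrow> ('k::field) pel \<Rightarrow> 'k pel \<Rightarrow> 'k pel" where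
  "pmul n f g = (\<lambda>(s, L). \<Sum>L1\<le>L. f ((sig n ^^ L1) s, L - L1) * g (s, L1))"

definition pone :: "nat \<Rightarrow> ('k::field) pel" where
  "pone n = (\<lambda>(s, L). if s \<in> {1..n} \<and> L = 0 then 1 else 0)"

(* The carrier of path_alg n, with bounded instead of finite support (pcar_iff_finite_support). *)
definition pcar :: "nat \<Rightarrow> ('k::field) pel set" where
  "pcar n = {f. \<exists>B. \<forall>s L. f (s, L) \<noteq> 0 \<longrightarrow> s \<in> {1..n} \<and> L \<le> B}"

definition pscale :: "'k::field \<Rightarrow> 'k pel \<Rightarrow> 'k pel" where
  "pscale c f = (\<lambda>p. c * f p)"

lemma pmul_apply: "pmul n f g (s, L) = (\<Sum>L1\<le>L. f ((sig n ^^ L1) s, L - L1) * g (s, L1))"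
  by (simp add: pmul_def)

lemma pone_apply: "pone n (s, L) = (if s \<in> {1..n} \<and> L = 0 then 1 else 0)"
  by (simp add: pone_def)

lemma path_el_apply: "path_el s L p = (if p = (s, L) then 1 else 0)"
  by (simp add: path_el_def)

lemma pcar_iff_finite_support:
  "f \<in> pcar n \<longleftrightarrow> finite {p. f p \<noteq> 0} \<and> (\<forall>s L. f (s, L) \<noteq> 0 \<longrightarrow> s \<in> {1..n})"
proof
  assume "f \<in> pcar n"
  then obtain B where B: "\<forall>s L. f (s, L) \<noteq> 0 \<longrightarrow> s \<in> {1..n} \<and> L \<le> B" by (auto simp: pcar_def)
  then have "{p. f p \<noteq> 0} \<subseteq> {1..n} \<times> {..B}" by auto
  then show "finite {p. f p \<noteq> 0} \<and> (\<forall>s L. f (s, L) \<noteq> 0 \<longrightarrow> s \<in> {1..n})"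
    using B finite_subset by blast
next
  assume f: "finite {p. f p \<noteq> 0} \<and> (\<forall>s L. f (s, L) \<noteq> 0 \<longrightarrow> s \<in> {1..n})"
  define B where "B = Max (insert 0 (snd ` {p. f p \<noteq> 0}))"
  have "L \<le> B" if "f (s, L) \<noteq> 0" for s L
    unfolding B_def using f that by (intro Max_ge) force+
  then show "f \<in> pcar n" using f unfolding pcar_def by blast
qed

lemma path_alg_simps:
  "carrier (path_alg n) = pcar n" "mult (path_alg n) = pmul n" "add (path_alg n) = (\<lambda>f g p. f p + g p)"
  "zero (path_alg n) = (\<lambda>_. 0)" "one (path_alg n) = pone n"
  by (simp_all add: path_alg_def set_eq_iff pcar_iff_finite_support pmul_def pone_def fun_eq_iff)

lemma pcar_out: "f \<in> pcar n \<Longrightarrow> s \<notin> {1..n} \<Longrightarrow> f (s, L) = 0"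
  by (auto simp: pcar_def)

lemma pcar_add: "f \<in> pcar n \<Longrightarrow> g \<in> pcar n \<Longrightarrow> (\<lambda>p. f p + g p) \<in> pcar n"
proof -
  assume "f \<in> pcar n" "g \<in> pcar n"
  then obtain Bf Bg where "\<forall>s L. f (s, L) \<noteq> 0 \<longrightarrow> s \<in> {1..n} \<and> L \<le> Bf"
    "\<forall>s L. g (s, L) \<noteq> 0 \<longrightarrow> s \<in> {1..n} \<and> L \<le> Bg"
    by (auto simp: pcar_def)
  then have "\<forall>s L. f (s, L) + g (s, L) \<noteq> 0 \<longrightarrow> s \<in> {1..n} \<and> L \<le> Bf + Bg"
    by (metis add.right_neutral add_0 trans_le_add1 trans_le_add2)
  then show ?thesis by (auto simp: pcar_def)
qed

lemma pcar_closed: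
  "f \<in> pcar n \<Longrightarrow> g \<in> pcar n \<Longrightarrow> (\<lambda>p. f p + g p) \<in> pcar n"
  "f \<in> pcar n \<Longrightarrow> (\<lambda>p. - f p) \<in> pcar n"
  "f \<in> pcar n \<Longrightarrow> pscale c f \<in> pcar n"
  "f \<in> pcar n \<Longrightarrow> f(q := 0) \<in> pcar n"
  "(\<lambda>_. 0) \<in> pcar n" "pone n \<in> pcar n"
  "s \<in> {1..n} \<Longrightarrow> path_el s L \<in> pcar n"
  by (fact pcar_add) (auto simp: pcar_def pscale_def pone_apply path_el_apply)

lemma pmul_closed:
  assumes "f \<in> pcar n" "g \<in> pcar n" shows "pmul n f g \<in> pcar n"
proof -
  obtain Bf Bg where "\<forall>s L. f (s, L) \<noteq> 0 \<longrightarrow> s \<in> {1..n} \<and> L \<le> Bf"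
    "\<forall>s L. g (s, L) \<noteq> 0 \<longrightarrow> s \<in> {1..n} \<and> L \<le> Bg"
    using assms by (auto simp: pcar_def)
  moreover have "\<exists>L1\<le>L. f ((sig n ^^ L1) s, L - L1) \<noteq> 0 \<and> g (s, L1) \<noteq> 0"
    if "pmul n f g (s, L) \<noteq> 0" for s L
    using sum.not_neutral_contains_not_neutral[OF that[unfolded pmul_apply]] by auto
  ultimately have "\<forall>s L. pmul n f g (s, L) \<noteq> 0 \<longrightarrow> s \<in> {1..n} \<and> L \<le> Bf + Bg"
    by fastforce
  then show ?thesis by (auto simp: pcar_def)
qed

lemma pmul_assoc: "pmul n (pmul n f g) h = pmul n f (pmul n g h)"
proof (intro ext, clarify)
  fix s L
  define F where "F a b = f ((sig n ^^ b) ((sig n ^^ a) s), L - (a + b)) * g ((sig n ^^ a) s, b) * h (s, a)"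
    for a b
  have "pmul n (pmul n f g) h (s, L) = (\<Sum>L1\<le>L. \<Sum>L2\<le>L - L1. F L1 L2)"
    unfolding pmul_apply F_def by (simp add: sum_distrib_right diff_diff_eq)
  also have "\<dots> = (\<Sum>(a, b)\<in>{(a, b). a + b \<le> L}. F a b)"
    by (subst sum.Sigma) (auto intro!: sum.cong)
  also have "\<dots> = (\<Sum>k\<le>L. \<Sum>i\<le>k. F i (k - i))"
    by (rule sum.triangle_reindex_eq)
  also have "\<dots> = pmul n f (pmul n g h) (s, L)"
    unfolding pmul_apply F_def
    by (intro sum.cong refl) (simp add: sum_distrib_left mult.assoc funpow_diff)
  finally show "pmul n (pmul n f g) h (s, L) = pmul n f (pmul n g h) (s, L)" .
qed

lemma sum_atMost_single:
  assumes "k \<le> (L::nat)" "\<And>j. j \<le> L \<Longrightarrow> j \<noteq> k \<Longrightarrow> F j = 0"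
  shows "(\<Sum>j\<le>L. F j) = (F k :: 'a::comm_monoid_add)"
  using assms by (subst sum.remove[of _ k]) (auto intro!: sum.neutral)

lemma pmul_path_el_right:
  "pmul n g (path_el i k) (s, L) = (if s = i \<and> k \<le> L then g ((sig n ^^ k) i, L - k) else 0)"
proof (cases "s = i \<and> k \<le> L")
  case True
  then have "pmul n g (path_el i k) (s, L) = g ((sig n ^^ k) s, L - k) * path_el i k (s, k)"
    unfolding pmul_apply by (intro sum_atMost_single) (auto simp: path_el_apply)
  then show ?thesis using True by (simp add: path_el_apply)
qed (auto simp: pmul_apply path_el_apply intro!: sum.neutral)

lemma pmul_path_el: "pmul n (path_el ((sig n ^^ L) s) M) (path_el s L) = path_el s (L + M)"
  by (auto simp: fun_eq_iff pmul_path_el_right path_el_apply)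

lemma pmul_pscale: "pmul n (pscale c f) g = pscale c (pmul n f g)"
  by (auto simp: pmul_def pscale_def fun_eq_iff sum_distrib_left mult.assoc)

lemma pmul_vanishing_low:
  assumes "\<And>s L. L < a \<Longrightarrow> f (s, L) = 0" "\<And>s L. L < b \<Longrightarrow> g (s, L) = 0" "L < a + b"
  shows "pmul n f g (s, L) = 0"
  unfolding pmul_apply
proof (intro sum.neutral ballI)
  fix L1 assume "L1 \<in> {..L}"
  then have "L1 < b \<or> L - L1 < a" using assms(3) by auto
  then show "f ((sig n ^^ L1) s, L - L1) * g (s, L1) = 0" using assms(1,2) by auto
qed

lemma pmul_at_0: "pmul n f g (s, 0) = f (s, 0) * g (s, 0)"
  by (simp add: pmul_apply)

locale cyclic_quiver =
  fixes n :: nat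
  assumes n_pos: "0 < n"
begin

lemma pone_left: "f \<in> pcar n \<Longrightarrow> pmul n (pone n) f = f"
proof (intro ext, clarify)
  fix s L assume f: "f \<in> pcar n"
  show "pmul n (pone n) f (s, L) = f (s, L)"
  proof (cases "s \<in> {1..n}")
    case True
    have "pmul n (pone n) f (s, L) = pone n ((sig n ^^ L) s, L - L) * f (s, L)"
      unfolding pmul_apply by (rule sum_atMost_single) (auto simp: pone_apply)
    then show ?thesis using sig_pow_in[OF True] by (simp add: pone_apply)
  qed (simp add: pmul_apply pcar_out[OF f])
qed

lemma pone_right: "f \<in> pcar n \<Longrightarrow> pmul n f (pone n) = f"
proof (intro ext, clarify)
  fix s L assume f: "f \<in> pcar n"
  show "pmul n f (pone n) (s, L) = f (s, L)"
  proof (cases "s \<in> {1..n}")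
    case True
    have "pmul n f (pone n) (s, L) = f ((sig n ^^ 0) s, L - 0) * pone n (s, 0)"
      unfolding pmul_apply by (rule sum_atMost_single) (auto simp: pone_apply)
    then show ?thesis using True by (simp add: pone_apply)
  qed (auto simp: pmul_apply pcar_out[OF f] pone_apply intro: sum.neutral)
qed

lemma ring_path_alg: "ring (path_alg n :: ('k::field) pel ring)"
proof (rule ringI)
  show "abelian_group (path_alg n :: 'k pel ring)"
  proof (rule abelian_groupI; simp add: path_alg_simps pcar_closed)
    fix x :: "'k pel" assume "x \<in> pcar n"
    then show "\<exists>y\<in>pcar n. (\<lambda>p. y p + x p) = (\<lambda>_. 0)"
      by (intro bexI[of _ "\<lambda>p. - x p"] pcar_closed) auto
  qed (auto simp: add.assoc add.commute)
  show "monoid (path_alg n :: 'k pel ring)"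
    by (rule monoidI) (simp_all add: path_alg_simps pmul_closed pcar_closed pmul_assoc pone_left pone_right)
qed (simp_all add: path_alg_simps pmul_def sum.distrib distrib_left distrib_right fun_eq_iff)

end

section \<open>Normal forms in A\<close>

(* The path of length L from s vanishes in A iff it runs once around the cycle from some
   vertex of D, i.e. contains a relation rho_lambda. *)
definition vanishes :: "nat \<Rightarrow> nat set \<Rightarrow> nat \<times> nat \<Rightarrow> bool" where
  "vanishes n D p \<longleftrightarrow> (\<exists>t. t + n \<le> snd p \<and> (sig n ^^ t) (fst p) \<in> D)"

definition vanishing_span :: "nat \<Rightarrow> nat set \<Rightarrow> ('k::field) pel set" where
  "vanishing_span n D = {f \<in> pcar n. \<forall>p. f p \<noteq> 0 \<longrightarrow> vanishes n D p}"

definition trunc :: "nat \<Rightarrow> nat set \<Rightarrow> ('k::field) pel \<Rightarrow> 'k pel" where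
  "trunc n D f = (\<lambda>p. if vanishes n D p then 0 else f p)"

definition cls :: "nat \<Rightarrow> nat set \<Rightarrow> ('k::field) pel \<Rightarrow> 'k pel set" where
  "cls n D f = rel_ideal n D +>\<^bsub>path_alg n\<^esub> f"

(* The truncation makes the choice of the representative irrelevant (cls_eq_iff). *)
definition nf :: "nat \<Rightarrow> nat set \<Rightarrow> ('k::field) pel set \<Rightarrow> 'k pel" where
  "nf n D z = trunc n D (SOME f. f \<in> pcar n \<and> cls n D f = z)"

lemma vanishes_shift: "vanishes n D ((sig n ^^ L1) s, L2) \<Longrightarrow> vanishes n D (s, L1 + L2)"
proof -
  assume "vanishes n D ((sig n ^^ L1) s, L2)"
  then obtain t where "t + n \<le> L2" "(sig n ^^ (t + L1)) s \<in> D"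
    by (auto simp: vanishes_def funpow_add)
  then show ?thesis unfolding vanishes_def by (intro exI[of _ "t + L1"]) auto
qed

lemma vanishes_mono: "vanishes n D (s, L1) \<Longrightarrow> L1 \<le> L \<Longrightarrow> vanishes n D (s, L)"
  by (auto simp: vanishes_def) (meson le_trans)

lemma pmul_vanishing_left:
  assumes "f \<in> vanishing_span n D" "pmul n f g (s, L) \<noteq> 0" shows "vanishes n D (s, L)"
proof -
  obtain L1 where "L1 \<le> L" "f ((sig n ^^ L1) s, L - L1) \<noteq> 0"
    using sum.not_neutral_contains_not_neutral[OF assms(2)[unfolded pmul_apply]] by auto
  then show ?thesis
    using assms(1) vanishes_shift[of n D L1 s "L - L1"] by (auto simp: vanishing_span_def)
qed

lemma pmul_vanishing_right:
  assumes "g \<in> vanishing_span n D" "pmul n f g (s, L) \<noteq> 0" shows "vanishes n D (s, L)"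
proof -
  obtain L1 where "L1 \<le> L" "g (s, L1) \<noteq> 0"
    using sum.not_neutral_contains_not_neutral[OF assms(2)[unfolded pmul_apply]] by auto
  moreover from this have "vanishes n D (s, L1)" using assms(1) by (auto simp: vanishing_span_def)
  ultimately show ?thesis using vanishes_mono by blast
qed

context cyclic_quiver
begin

lemma not_vanishes_0: "\<not> vanishes n D (s, 0)"
  using n_pos by (simp add: vanishes_def)

lemma path_alg_minus: "f \<in> pcar n \<Longrightarrow> \<ominus>\<^bsub>path_alg n\<^esub> f = (\<lambda>p. - f p)"
  by (rule abelian_group.minus_equality[OF ring.is_abelian_group[OF ring_path_alg]])
     (auto simp: path_alg_simps pcar_closed)

lemma vanishing_span_ideal: "ideal (vanishing_span n D) (path_alg n :: ('k::field) pel ring)"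
proof (rule idealI[OF ring_path_alg])
  interpret R: ring "path_alg n :: 'k pel ring" by (rule ring_path_alg)
  have "additive_subgroup (vanishing_span n D) (path_alg n :: 'k pel ring)"
  proof (rule R.additive_subgroup_closedI)
    show "vanishing_span n D \<subseteq> carrier (path_alg n :: 'k pel ring)"
      by (auto simp: vanishing_span_def path_alg_simps)
    show "\<zero>\<^bsub>path_alg n\<^esub> \<in> (vanishing_span n D :: 'k pel set)"
      by (simp add: vanishing_span_def path_alg_simps pcar_closed)
  next
    fix x y :: "'k pel" assume "x \<in> vanishing_span n D" "y \<in> vanishing_span n D"
    then show "x \<oplus>\<^bsub>path_alg n\<^esub> y \<in> vanishing_span n D"
      by (auto simp: vanishing_span_def path_alg_simps pcar_closed) (metis add_0)
  next
    fix x :: "'k pel" assume "x \<in> vanishing_span n D"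
    then show "\<ominus>\<^bsub>path_alg n\<^esub> x \<in> vanishing_span n D"
      by (auto simp: vanishing_span_def path_alg_minus pcar_closed)
  qed
  then show "subgroup (vanishing_span n D) (add_monoid (path_alg n :: 'k pel ring))"
    by (simp add: additive_subgroup_def)
next
  fix a x :: "'k pel" assume a: "a \<in> vanishing_span n D" and "x \<in> carrier (path_alg n)"
  then show "x \<otimes>\<^bsub>path_alg n\<^esub> a \<in> vanishing_span n D" "a \<otimes>\<^bsub>path_alg n\<^esub> x \<in> vanishing_span n D"
    using pmul_vanishing_left[OF a] pmul_vanishing_right[OF a]
    by (auto simp: vanishing_span_def path_alg_simps pmul_closed)
qed

lemma mem_additive_subgroup_if_monomials:
  assumes I: "additive_subgroup I (path_alg n)" and f: "f \<in> pcar n"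
    and mono: "\<And>s L. f (s, L) \<noteq> 0 \<Longrightarrow> pscale (f (s, L)) (path_el s L) \<in> I"
  shows "f \<in> (I :: ('k::field) pel set)"
proof -
  interpret I: additive_subgroup I "path_alg n :: 'k pel ring" by (rule I)
  have "finite {p. f p \<noteq> 0}" using f by (simp add: pcar_iff_finite_support)
  moreover have "\<forall>g. g \<in> pcar n \<and> {p. g p \<noteq> 0} \<subseteq> S \<and> (\<forall>p. g p \<noteq> 0 \<longrightarrow> g p = f p) \<longrightarrow> g \<in> I"
    if "finite S" for S
    using that
  proof (induction S rule: finite_induct)
    case empty
    have "(\<lambda>_. 0) \<in> I" using I.zero_closed by (simp add: path_alg_simps)
    moreover have "g = (\<lambda>_. 0)" if "{p. g p \<noteq> 0} \<subseteq> {}" for g :: "'k pel"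
      using that by auto
    ultimately show ?case by blast
  next
    case (insert q S)
    show ?case
    proof (intro allI impI)
      fix g assume g: "g \<in> pcar n \<and> {p. g p \<noteq> 0} \<subseteq> insert q S \<and> (\<forall>p. g p \<noteq> 0 \<longrightarrow> g p = f p)"
      obtain s L where q: "q = (s, L)" by (cases q)
      have "g(q := 0) \<in> pcar n \<and> {p. (g(q := 0)) p \<noteq> 0} \<subseteq> S
          \<and> (\<forall>p. (g(q := 0)) p \<noteq> 0 \<longrightarrow> (g(q := 0)) p = f p)"
        using g by (auto simp: pcar_closed)
      then have "g(q := 0) \<in> I" using insert.IH by blast
      moreover have "pscale (g q) (path_el s L) \<in> I"
      proof (cases "g q = 0")
        case True
        then have "pscale (g q) (path_el s L) = \<zero>\<^bsub>path_alg n\<^esub>"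
          by (simp add: pscale_def path_alg_simps fun_eq_iff)
        then show ?thesis by simp
      next
        case False
        then have "g q = f q" using g by blast
        then show ?thesis using False mono q by simp
      qed
      ultimately have "g(q := 0) \<oplus>\<^bsub>path_alg n\<^esub> pscale (g q) (path_el s L) \<in> I" by simp
      moreover have "g(q := 0) \<oplus>\<^bsub>path_alg n\<^esub> pscale (g q) (path_el s L) = g"
        by (auto simp: path_alg_simps pscale_def path_el_apply q fun_eq_iff)
      ultimately show "g \<in> I" by simp
    qed
  qed
  ultimately show ?thesis using f by blast
qed

end

locale cyclic_nakayama = cyclic_quiver +
  fixes D :: "nat set"
  assumes D_sub: "D \<subseteq> {1..n}" and D_ne: "D \<noteq> {}"
begin

abbreviation A :: "('k::field) pel set ring" where "A \<equiv> Aalg n D"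

lemma rel_ideal_ideal: "ideal (rel_ideal n D) (path_alg n :: ('k::field) pel ring)"
  unfolding rel_ideal_def using D_sub
  by (intro ring.genideal_ideal[OF ring_path_alg]) (auto simp: path_alg_simps rho_def pcar_closed)

lemma rel_ideal_subset: "rel_ideal n D \<subseteq> (vanishing_span n D :: ('k::field) pel set)"
  unfolding rel_ideal_def
proof (intro ring.genideal_minimal[OF ring_path_alg] vanishing_span_ideal subsetI)
  fix x :: "'k pel" assume "x \<in> {rho n lam | lam. lam \<in> D}"
  then show "x \<in> vanishing_span n D" using D_sub
    by (auto simp: vanishing_span_def rho_def pcar_closed path_el_apply vanishes_def
        split: if_splits intro!: exI[of _ 0])
qed

lemma vanishing_monomial_in_rel_ideal:
  assumes "vanishes n D (s, L)" "s \<in> {1..n}"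
  shows "(pscale c (path_el s L) :: ('k::field) pel) \<in> rel_ideal n D"
proof -
  interpret I: ideal "rel_ideal n D" "path_alg n :: 'k pel ring" by (rule rel_ideal_ideal)
  obtain t where t: "t + n \<le> L" "(sig n ^^ t) s \<in> D" using assms(1) by (auto simp: vanishes_def)
  have "rho n ((sig n ^^ t) s) \<in> (rel_ideal n D :: 'k pel set)"
    unfolding rel_ideal_def using t(2) D_sub
    by (intro subsetD[OF ring.genideal_self[OF ring_path_alg]]) (auto simp: path_alg_simps rho_def pcar_closed)
  then have "pmul n (rho n ((sig n ^^ t) s)) (path_el s t) \<in> (rel_ideal n D :: 'k pel set)"
    using I.I_r_closed assms(2) by (simp add: path_alg_simps pcar_closed)
  then have "(path_el s (t + n) :: 'k pel) \<in> rel_ideal n D"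
    by (simp add: rho_def pmul_path_el)
  then have "pmul n (pscale c (path_el ((sig n ^^ (t + n)) s) (L - (t + n)))) (path_el s (t + n))
      \<in> (rel_ideal n D :: 'k pel set)"
    using I.I_l_closed sig_pow_in[OF assms(2)] by (simp add: path_alg_simps pcar_closed)
  then show ?thesis using t(1) by (simp add: pmul_pscale pmul_path_el)
qed

lemma rel_ideal_eq: "rel_ideal n D = (vanishing_span n D :: ('k::field) pel set)"
proof
  show "vanishing_span n D \<subseteq> (rel_ideal n D :: 'k pel set)"
  proof
    fix f :: "'k pel" assume f: "f \<in> vanishing_span n D"
    show "f \<in> rel_ideal n D"
    proof (rule mem_additive_subgroup_if_monomials)
      show "additive_subgroup (rel_ideal n D) (path_alg n :: 'k pel ring)"
        using rel_ideal_ideal by (rule ideal.axioms(1))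
      show "f \<in> pcar n" using f by (simp add: vanishing_span_def)
      fix s L assume "f (s, L) \<noteq> 0"
      then show "pscale (f (s, L)) (path_el s L) \<in> rel_ideal n D"
        using f pcar_out by (intro vanishing_monomial_in_rel_ideal) (auto simp: vanishing_span_def)
    qed
  qed
qed (rule rel_ideal_subset)

lemma cls_ring_hom: "cls n D \<in> ring_hom (path_alg n) (A :: ('k::field) pel set ring)"
  unfolding cls_def Aalg_def by (rule ideal.rcos_ring_hom[OF rel_ideal_ideal])

lemma ring_A: "ring (A :: ('k::field) pel set ring)"
  unfolding Aalg_def by (rule ideal.quotient_is_ring[OF rel_ideal_ideal])

lemma carrier_A: "carrier A = cls n D ` (pcar n :: ('k::field) pel set)"
  unfolding Aalg_def FactRing_def A_RCOSETS_def' cls_def by (auto simp: path_alg_simps)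

lemma cls_closed: "f \<in> pcar n \<Longrightarrow> cls n D f \<in> carrier (A :: ('k::field) pel set ring)"
  by (simp add: carrier_A)

lemma cls_add: "f \<in> pcar n \<Longrightarrow> g \<in> pcar n \<Longrightarrow>
    cls n D (\<lambda>p. f p + g p) = cls n D f \<oplus>\<^bsub>A\<^esub> (cls n D g :: ('k::field) pel set)"
  using ring_hom_add[OF cls_ring_hom] by (simp add: path_alg_simps)

lemma cls_mult: "f \<in> pcar n \<Longrightarrow> g \<in> pcar n \<Longrightarrow>
    cls n D (pmul n f g) = cls n D f \<otimes>\<^bsub>A\<^esub> (cls n D g :: ('k::field) pel set)"
  using ring_hom_mult[OF cls_ring_hom] by (simp add: path_alg_simps)

lemma cls_one: "cls n D (pone n) = (\<one>\<^bsub>A\<^esub> :: ('k::field) pel set)"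
  using ring_hom_one[OF cls_ring_hom] by (simp add: path_alg_simps)

lemma cls_zero: "cls n D (\<lambda>_. 0) = (\<zero>\<^bsub>A\<^esub> :: ('k::field) pel set)"
  using ring_hom_zero[OF cls_ring_hom ring_path_alg ring_A] by (simp add: path_alg_simps)

lemma cls_eq_iff:
  assumes "f \<in> pcar n" "g \<in> pcar n"
  shows "cls n D f = (cls n D g :: ('k::field) pel set) \<longleftrightarrow> trunc n D f = trunc n D g"
proof -
  have "cls n D f = cls n D g \<longleftrightarrow> f \<ominus>\<^bsub>path_alg n\<^esub> g \<in> (vanishing_span n D :: 'k pel set)"
    using ring.quotient_eq_iff_same_a_r_cos[OF ring_path_alg rel_ideal_ideal, of f g] assms
    by (simp add: cls_def path_alg_simps rel_ideal_eq)
  also have "f \<ominus>\<^bsub>path_alg n\<^esub> g = (\<lambda>p. f p - g p)"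
    using assms by (simp add: a_minus_def path_alg_minus path_alg_simps)
  also have "(\<lambda>p. f p - g p) \<in> vanishing_span n D \<longleftrightarrow> (\<forall>p. \<not> vanishes n D p \<longrightarrow> f p = g p)"
    using pcar_closed(1)[OF assms(1) pcar_closed(2)[OF assms(2)]]
    by (auto simp: vanishing_span_def)
  also have "\<dots> \<longleftrightarrow> trunc n D f = trunc n D g"
    unfolding trunc_def fun_eq_iff by (intro iff_allI) auto
  finally show ?thesis .
qed

end

lemma trunc_closed: "f \<in> pcar n \<Longrightarrow> trunc n D f \<in> pcar n"
  by (auto simp: pcar_def trunc_def)

lemma trunc_trunc [simp]: "trunc n D (trunc n D f) = trunc n D f"
  by (auto simp: trunc_def)

context cyclic_nakayama
begin

lemma cls_trunc: "f \<in> pcar n \<Longrightarrow> cls n D (trunc n D f) = (cls n D f :: ('k::field) pel set)"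
  by (simp add: cls_eq_iff trunc_closed)

lemma nf_closed: "z \<in> carrier A \<Longrightarrow> nf n D z \<in> pcar n"
  and cls_nf: "z \<in> carrier A \<Longrightarrow> cls n D (nf n D z) = z"
proof -
  assume "z \<in> carrier A"
  then have "\<exists>f. f \<in> pcar n \<and> cls n D f = z" by (auto simp: carrier_A)
  then have f: "(SOME f. f \<in> pcar n \<and> cls n D f = z) \<in> pcar n"
    "cls n D (SOME f. f \<in> pcar n \<and> cls n D f = z) = z"
    by (rule someI_ex[where P = "\<lambda>f. f \<in> pcar n \<and> cls n D f = z", THEN conjunct1],
        rule someI_ex[where P = "\<lambda>f. f \<in> pcar n \<and> cls n D f = z", THEN conjunct2])
  then show "nf n D z \<in> pcar n" by (simp add: nf_def trunc_closed)
  show "cls n D (nf n D z) = z" using f by (simp add: nf_def cls_trunc)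
qed

lemma trunc_nf [simp]: "trunc n D (nf n D z) = nf n D z"
  by (simp add: nf_def)

lemma nf_cls:
  assumes "f \<in> pcar n" shows "nf n D (cls n D f :: ('k::field) pel set) = trunc n D f"
proof -
  have "cls n D (nf n D (cls n D f)) = (cls n D f :: 'k pel set)"
    using cls_nf[OF cls_closed[OF assms]] .
  then have "trunc n D (nf n D (cls n D f :: 'k pel set)) = trunc n D f"
    using cls_eq_iff[OF nf_closed[OF cls_closed[OF assms]] assms] by blast
  then show ?thesis by simp
qed

lemma nf_not_vanishes: "nf n D z p \<noteq> 0 \<Longrightarrow> \<not> vanishes n D p"
  by (simp add: nf_def trunc_def split: if_splits)

lemma nf_inj:
  assumes "z \<in> carrier A" "w \<in> carrier A"
  shows "nf n D z = nf n D w \<longleftrightarrow> z = (w :: ('k::field) pel set)"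
proof
  assume "nf n D z = nf n D w"
  then have "cls n D (nf n D z) = cls n D (nf n D w)" by (rule arg_cong)
  then show "z = w" by (simp only: cls_nf assms)
qed simp

lemma nf_add:
  assumes "z \<in> carrier A" "w \<in> carrier A"
  shows "nf n D (z \<oplus>\<^bsub>A\<^esub> w) = (\<lambda>p. nf n D z p + nf n D (w :: ('k::field) pel set) p)"
proof -
  have "z \<oplus>\<^bsub>A\<^esub> w = cls n D (\<lambda>p. nf n D z p + nf n D w p)"
    using cls_add[OF nf_closed[OF assms(1)] nf_closed[OF assms(2)]] by (simp only: cls_nf assms)
  then have "nf n D (z \<oplus>\<^bsub>A\<^esub> w) = trunc n D (\<lambda>p. nf n D z p + nf n D w p)"
    using nf_cls[OF pcar_closed(1)[OF nf_closed[OF assms(1)] nf_closed[OF assms(2)]]] by simp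
  also have "\<dots> = (\<lambda>p. trunc n D (nf n D z) p + trunc n D (nf n D w) p)"
    by (simp add: trunc_def fun_eq_iff)
  finally show ?thesis by simp
qed

lemma nf_mult:
  assumes "z \<in> carrier A" "w \<in> carrier A"
  shows "nf n D (z \<otimes>\<^bsub>A\<^esub> w) = trunc n D (pmul n (nf n D z) (nf n D (w :: ('k::field) pel set)))"
proof -
  have "z \<otimes>\<^bsub>A\<^esub> w = cls n D (pmul n (nf n D z) (nf n D w))"
    using cls_mult[OF nf_closed[OF assms(1)] nf_closed[OF assms(2)]] by (simp only: cls_nf assms)
  then show ?thesis
    using nf_cls[OF pmul_closed[OF nf_closed[OF assms(1)] nf_closed[OF assms(2)]]] by simp
qed

lemma nf_zero: "nf n D (\<zero>\<^bsub>A\<^esub> :: ('k::field) pel set) = (\<lambda>_. 0)"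
  using nf_cls[OF pcar_closed(5)] by (simp add: cls_zero trunc_def)

lemma nf_one: "nf n D (\<one>\<^bsub>A\<^esub> :: ('k::field) pel set) = pone n"
proof -
  have "trunc n D (pone n) = (pone n :: 'k pel)"
    by (auto simp: trunc_def pone_apply fun_eq_iff not_vanishes_0)
  then show ?thesis by (simp flip: cls_one add: nf_cls pcar_closed)
qed

lemma nf_minus:
  assumes "z \<in> carrier A"
  shows "nf n D (\<ominus>\<^bsub>A\<^esub> z) = (\<lambda>p. - nf n D (z :: ('k::field) pel set) p)"
proof -
  interpret A: ring A by (rule ring_A)
  have "nf n D (\<ominus>\<^bsub>A\<^esub> z \<oplus>\<^bsub>A\<^esub> z) = (\<lambda>_. 0)"
    using assms by (simp add: A.l_neg nf_zero)
  then show ?thesis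
    using assms by (simp add: nf_add fun_eq_iff add_eq_0_iff)
qed

lemma nf_eq_zero_iff:
  "z \<in> carrier A \<Longrightarrow> z = \<zero>\<^bsub>A\<^esub> \<longleftrightarrow> nf n D (z :: ('k::field) pel set) = (\<lambda>_. 0)"
  using nf_inj[OF _ ring.ring_simprules(2)[OF ring_A]] by (auto simp: nf_zero)

lemma idem_eq_cls: "idem n D i = (cls n D (path_el i 0) :: ('k::field) pel set)"
  by (simp add: idem_def cls_def)

lemma nf_idem: "i \<in> {1..n} \<Longrightarrow> nf n D (idem n D i :: ('k::field) pel set) = path_el i 0"
  by (auto simp: idem_eq_cls nf_cls pcar_closed trunc_def path_el_apply fun_eq_iff not_vanishes_0)

lemma idem_closed: "i \<in> {1..n} \<Longrightarrow> idem n D i \<in> carrier (A :: ('k::field) pel set ring)"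
  by (simp add: idem_eq_cls cls_closed pcar_closed)

lemma nf_mult_at_0:
  "z \<in> carrier A \<Longrightarrow> w \<in> carrier A \<Longrightarrow>
    nf n D (z \<otimes>\<^bsub>A\<^esub> w) (s, 0) = nf n D z (s, 0) * nf n D (w :: ('k::field) pel set) (s, 0)"
  by (simp add: nf_mult trunc_def not_vanishes_0 pmul_at_0)

end

section \<open>The radical filtration\<close>

(* Jpow n D t turns out to be J^t: see jac_A and Jpow_mult. *)
definition Jpow :: "nat \<Rightarrow> nat set \<Rightarrow> nat \<Rightarrow> ('k::field) pel set set" where
  "Jpow n D t = {z \<in> carrier (Aalg n D). \<forall>s L. L < t \<longrightarrow> nf n D z (s, L) = 0}"

definition rel_dist :: "nat \<Rightarrow> nat set \<Rightarrow> nat \<Rightarrow> nat" where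
  "rel_dist n D j = (LEAST r. (sig n ^^ r) j \<in> D)"

definition vertex_ideal :: "nat \<Rightarrow> nat set \<Rightarrow> nat \<Rightarrow> ('k::field) pel set set" where
  "vertex_ideal n D s = {z \<in> carrier (Aalg n D). nf n D z (s, 0) = 0}"

context cyclic_nakayama
begin

lemma Jpow_subset: "Jpow n D t \<subseteq> carrier (A :: ('k::field) pel set ring)"
  by (auto simp: Jpow_def)

lemma Jpow_0: "Jpow n D 0 = carrier (A :: ('k::field) pel set ring)"
  by (auto simp: Jpow_def)

lemma Jpow_antimono: "a \<le> b \<Longrightarrow> Jpow n D b \<subseteq> (Jpow n D a :: ('k::field) pel set set)"
  by (auto simp: Jpow_def)

lemma Jpow_mult:
  assumes "z \<in> Jpow n D a" "w \<in> (Jpow n D b :: ('k::field) pel set set)"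
  shows "z \<otimes>\<^bsub>A\<^esub> w \<in> Jpow n D (a + b)"
proof -
  have c: "z \<in> carrier A" "w \<in> carrier A" using assms by (auto simp: Jpow_def)
  have "nf n D (z \<otimes>\<^bsub>A\<^esub> w) (s, L) = 0" if "L < a + b" for s L
    using pmul_vanishing_low[of a "nf n D z" b "nf n D w" L n s] assms that
    by (simp add: nf_mult[OF c] trunc_def Jpow_def)
  then show ?thesis using c ring.ring_simprules(5)[OF ring_A] by (simp add: Jpow_def)
qed

lemma Jpow_left_ideal: "left_ideal A (Jpow n D t :: ('k::field) pel set set)"
proof -
  interpret A: ring "A :: 'k pel set ring" by (rule ring_A)
  have "additive_subgroup (Jpow n D t) (A :: 'k pel set ring)"
    by (rule A.additive_subgroup_closedI) (auto simp: Jpow_def nf_zero nf_add nf_minus)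
  then show ?thesis
    using Jpow_mult[of _ 0] by (auto simp: left_ideal_def Jpow_0)
qed

lemma rel_dist:
  assumes "j \<in> {1..n}"
  shows "(sig n ^^ rel_dist n D j) j \<in> D" "rel_dist n D j < n"
proof -
  obtain d where "d \<in> D" using D_ne by blast
  then obtain r where r: "r < n" "(sig n ^^ r) j \<in> D"
    using sig_pow_surj[OF assms] D_sub by blast
  then show "(sig n ^^ rel_dist n D j) j \<in> D"
    unfolding rel_dist_def by (intro LeastI[of "\<lambda>r. (sig n ^^ r) j \<in> D"]) simp
  have "rel_dist n D j \<le> r" unfolding rel_dist_def using r(2) by (rule Least_le)
  then show "rel_dist n D j < n" using r(1) by simp
qed

lemma vanishes_iff:
  assumes "j \<in> {1..n}" shows "vanishes n D (j, L) \<longleftrightarrow> n + rel_dist n D j \<le> L"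
proof
  assume "vanishes n D (j, L)"
  then obtain t where t: "t + n \<le> L" "(sig n ^^ t) j \<in> D" by (auto simp: vanishes_def)
  have "rel_dist n D j \<le> t" unfolding rel_dist_def using t(2) by (rule Least_le)
  then show "n + rel_dist n D j \<le> L" using t by simp
next
  assume "n + rel_dist n D j \<le> L"
  then show "vanishes n D (j, L)"
    unfolding vanishes_def using rel_dist(1)[OF assms] by (intro exI[of _ "rel_dist n D j"]) auto
qed

lemma nf_support:
  assumes "z \<in> carrier A" "nf n D (z :: ('k::field) pel set) (s, L) \<noteq> 0"
  shows "s \<in> {1..n}" "L < n + rel_dist n D s"
proof -
  show s: "s \<in> {1..n}" using assms pcar_out[OF nf_closed] by blast
  show "L < n + rel_dist n D s"
    using nf_not_vanishes[OF assms(2)] vanishes_iff[OF s] by simp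
qed

lemma Jpow_eq_zero: "Jpow n D (2 * n - 1) = {\<zero>\<^bsub>A\<^esub> :: ('k::field) pel set}"
proof -
  have "nf n D z = (\<lambda>_. 0)" if "z \<in> Jpow n D (2 * n - 1)" for z :: "'k pel set"
  proof
    fix p :: "nat \<times> nat"
    obtain s L where p: "p = (s, L)" by (cases p)
    show "nf n D z p = 0"
    proof (rule ccontr)
      assume "nf n D z p \<noteq> 0"
      then have "L < 2 * n - 1"
        using that nf_support[of z s L] rel_dist(2)[of s] by (auto simp: p Jpow_def)
      then show False using that \<open>nf n D z p \<noteq> 0\<close> by (simp add: p Jpow_def)
    qed
  qed
  then show ?thesis
    using nf_eq_zero_iff Jpow_subset ring.ring_simprules(2)[OF ring_A]
    by (auto simp: Jpow_def nf_zero)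
qed

lemma Jpow_nilpotent:
  assumes "y \<in> (Jpow n D 1 :: ('k::field) pel set set)"
  shows "y [^]\<^bsub>A\<^esub> (2 * n - 1) = \<zero>\<^bsub>A\<^esub>"
proof -
  interpret A: ring "A :: 'k pel set ring" by (rule ring_A)
  have "y [^]\<^bsub>A\<^esub> m \<in> Jpow n D m" for m
  proof (induction m)
    case 0 then show ?case by (simp add: Jpow_0)
  next
    case (Suc m) then show ?case using Jpow_mult[OF Suc assms] by simp
  qed
  then show ?thesis using Jpow_eq_zero by blast
qed

lemma vertex_ideal_left_ideal: "left_ideal A (vertex_ideal n D s :: ('k::field) pel set set)"
proof -
  interpret A: ring "A :: 'k pel set ring" by (rule ring_A)
  have "additive_subgroup (vertex_ideal n D s) (A :: 'k pel set ring)"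
    by (rule A.additive_subgroup_closedI) (auto simp: vertex_ideal_def nf_zero nf_add nf_minus)
  then show ?thesis by (auto simp: left_ideal_def vertex_ideal_def nf_mult_at_0)
qed

lemma vertex_ideal_maximal:
  assumes s: "s \<in> {1..n}"
  shows "max_left_ideal A (vertex_ideal n D s :: ('k::field) pel set set)"
proof -
  interpret A: ring "A :: 'k pel set ring" by (rule ring_A)
  have "L = vertex_ideal n D s"
    if L: "left_ideal A L" "vertex_ideal n D s \<subseteq> L" "L \<noteq> carrier A" for L :: "'k pel set set"
  proof (rule ccontr)
    assume "L \<noteq> vertex_ideal n D s"
    then obtain z where z: "z \<in> L" "z \<notin> vertex_ideal n D s" using L(2) by blast
    interpret L: additive_subgroup L A using L(1) by (simp add: left_ideal_def)
    have L_mult: "a \<in> carrier A \<Longrightarrow> y \<in> L \<Longrightarrow> a \<otimes>\<^bsub>A\<^esub> y \<in> L" for a y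
      using L(1) by (simp add: left_ideal_def)
    have zc: "z \<in> carrier A" using z L.a_subset by blast
    define c where "c = nf n D z (s, 0)"
    have "c \<noteq> 0" using z zc by (simp add: vertex_ideal_def c_def)
    define b where "b = cls n D (pscale (inverse c) (path_el s 0))"
    have bc: "b \<in> carrier A" unfolding b_def using s by (simp add: cls_closed pcar_closed)
    have "nf n D b (s, 0) = inverse c"
      using nf_cls[OF pcar_closed(3)[OF pcar_closed(7)[OF s]], of "inverse c" 0]
      by (simp add: b_def trunc_def not_vanishes_0 pscale_def path_el_apply)
    then have w: "nf n D (b \<otimes>\<^bsub>A\<^esub> z) (s, 0) = 1"
      using \<open>c \<noteq> 0\<close> by (simp add: nf_mult_at_0 bc zc c_def)
    have "\<one>\<^bsub>A\<^esub> \<ominus>\<^bsub>A\<^esub> b \<otimes>\<^bsub>A\<^esub> z \<in> vertex_ideal n D s"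
      using s w bc zc by (simp add: vertex_ideal_def a_minus_def nf_add nf_minus nf_one pone_apply)
    then have "(\<one>\<^bsub>A\<^esub> \<ominus>\<^bsub>A\<^esub> b \<otimes>\<^bsub>A\<^esub> z) \<oplus>\<^bsub>A\<^esub> b \<otimes>\<^bsub>A\<^esub> z \<in> L"
      using L(2) L_mult[OF bc z(1)] by blast
    then have "\<one>\<^bsub>A\<^esub> \<in> L"
      using bc zc by (simp add: a_minus_def A.a_assoc A.l_neg)
    then have "carrier A \<subseteq> L" using L_mult A.r_one by (metis subsetI)
    then show False using L(3) L.a_subset by blast
  qed
  moreover have "\<one>\<^bsub>A\<^esub> \<notin> vertex_ideal n D s" using s by (simp add: vertex_ideal_def nf_one pone_apply)
  ultimately show ?thesis
    using vertex_ideal_left_ideal A.one_closed unfolding max_left_ideal_def by blast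
qed

lemma jac_A: "jac A = (Jpow n D 1 :: ('k::field) pel set set)"
proof
  show "Jpow n D 1 \<subseteq> jac (A :: 'k pel set ring)"
    using Jpow_nilpotent by (intro nil_left_ideal_subset_jac ring_A Jpow_left_ideal) blast
  show "jac A \<subseteq> (Jpow n D 1 :: 'k pel set set)"
  proof
    fix x :: "'k pel set" assume x: "x \<in> jac A"
    have "x \<in> vertex_ideal n D s" if "s \<in> {1..n}" for s
      using x vertex_ideal_maximal[OF that] unfolding jac_def by blast
    moreover have xc: "x \<in> carrier A" using calculation[of 1] n_pos by (simp add: vertex_ideal_def)
    ultimately show "x \<in> Jpow n D 1"
      using pcar_out[OF nf_closed[OF xc]] by (auto simp: Jpow_def vertex_ideal_def)
  qed
qed

end

section \<open>The indecomposable projectives P_j\<close>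

definition Pcar :: "nat \<Rightarrow> nat set \<Rightarrow> nat \<Rightarrow> ('k::field) pel set set" where
  "Pcar n D j = {z \<in> carrier (Aalg n D). \<forall>s L. s \<noteq> j \<longrightarrow> nf n D z (s, L) = 0}"

context cyclic_nakayama
begin

lemma Pcar_subset: "Pcar n D j \<subseteq> carrier (A :: ('k::field) pel set ring)"
  by (auto simp: Pcar_def)

lemma Pcar_carrier: "z \<in> Pcar n D j \<Longrightarrow> z \<in> carrier (A :: ('k::field) pel set ring)"
  by (rule subsetD[OF Pcar_subset])

lemma nf_mult_cls_path:
  assumes y: "y \<in> carrier A" and i: "i \<in> {1..n}"
  shows "nf n D (y \<otimes>\<^bsub>A\<^esub> cls n D (path_el i k)) (s, L) =
    (if s = i \<and> k \<le> L \<and> \<not> vanishes n D (i, L) then nf n D (y :: ('k::field) pel set) ((sig n ^^ k) i, L - k) else 0)"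
proof (cases "vanishes n D (i, k)")
  case True
  then have "trunc n D (path_el i k) = (\<lambda>_. 0 :: 'k)"
    by (auto simp: trunc_def path_el_apply fun_eq_iff)
  moreover have "vanishes n D (i, L)" if "k \<le> L" using vanishes_mono[OF True that] .
  ultimately show ?thesis
    using y i by (auto simp: nf_mult cls_closed pcar_closed nf_cls pmul_def trunc_def)
next
  case False
  then have "trunc n D (path_el i k) = (path_el i k :: 'k pel)"
    by (auto simp: trunc_def path_el_apply fun_eq_iff)
  then show ?thesis
    using y i by (auto simp: nf_mult cls_closed pcar_closed nf_cls pmul_path_el_right trunc_def)
qed

lemma cls_path_in_Pcar_Jpow:
  "i \<in> {1..n} \<Longrightarrow> cls n D (path_el i k) \<in> Pcar n D i \<inter> (Jpow n D k :: ('k::field) pel set set)"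
  by (auto simp: Pcar_def Jpow_def cls_closed pcar_closed nf_cls trunc_def path_el_apply)

lemma factor_through_path:
  assumes i: "i \<in> {1..n}" and x: "x \<in> Pcar n D i \<inter> (Jpow n D (k + t) :: ('k::field) pel set set)"
  shows "\<exists>y \<in> Pcar n D ((sig n ^^ k) i) \<inter> Jpow n D t. y \<otimes>\<^bsub>A\<^esub> cls n D (path_el i k) = x"
proof -
  define j where "j = (sig n ^^ k) i"
  have xc: "x \<in> carrier A" using x by (simp add: Pcar_def)
  define h where "h = nf n D x"
  have h_i: "h (s, L) = 0" if "s \<noteq> i \<or> L < k + t" for s L
    using x that by (auto simp: h_def Pcar_def Jpow_def)
  define g where "g = (\<lambda>(s, M). if s = j then h (i, M + k) else 0)"
  have "g \<in> pcar n"
  proof -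
    obtain B where B: "\<forall>s L. h (s, L) \<noteq> 0 \<longrightarrow> s \<in> {1..n} \<and> L \<le> B"
      using nf_closed[OF xc] by (auto simp: h_def pcar_def)
    have "s \<in> {1..n} \<and> M \<le> B" if "g (s, M) \<noteq> 0" for s M
    proof -
      have "s = j" "h (i, M + k) \<noteq> 0" using that by (auto simp: g_def split: if_splits)
      then show ?thesis using B sig_pow_in[OF i] unfolding j_def by fastforce
    qed
    then show ?thesis by (auto simp: pcar_def)
  qed
  define y where "y = (cls n D g :: 'k pel set)"
  have "y \<in> Pcar n D j \<inter> Jpow n D t"
    using \<open>g \<in> pcar n\<close> h_i
    by (auto simp: y_def Pcar_def Jpow_def cls_closed nf_cls trunc_def g_def)
  moreover have "pmul n g (path_el i k) = h"
    using h_i by (auto simp: fun_eq_iff pmul_path_el_right g_def j_def not_le)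
  then have "cls n D h = y \<otimes>\<^bsub>A\<^esub> cls n D (path_el i k)"
    using cls_mult[OF \<open>g \<in> pcar n\<close> pcar_closed(7)[OF i], of k] unfolding y_def by simp
  then have "y \<otimes>\<^bsub>A\<^esub> cls n D (path_el i k) = x"
    by (simp add: h_def cls_nf xc)
  ultimately show ?thesis unfolding j_def by blast
qed

lemma nf_mult_idem:
  assumes "z \<in> carrier A" "j \<in> {1..n}"
  shows "nf n D (z \<otimes>\<^bsub>A\<^esub> idem n D j) (s, L) = (if s = j then nf n D (z :: ('k::field) pel set) (s, L) else 0)"
  using nf_mult_cls_path[OF assms, of 0 s L] nf_not_vanishes[of z "(j, L)"]
  by (auto simp: idem_eq_cls)

lemma Pcar_mult_idem:
  assumes z: "z \<in> Pcar n D j" and j: "j \<in> {1..n}"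
  shows "z \<otimes>\<^bsub>A\<^esub> idem n D j = (z :: ('k::field) pel set)"
proof -
  have zc: "z \<in> carrier A" using z by (simp add: Pcar_def)
  have "nf n D (z \<otimes>\<^bsub>A\<^esub> idem n D j) = nf n D z"
    using z by (auto simp: fun_eq_iff nf_mult_idem[OF zc j] Pcar_def)
  then show ?thesis
    using nf_inj ring.ring_simprules(5)[OF ring_A zc idem_closed[OF j]] zc by blast
qed

lemma idem_in_Pcar: "j \<in> {1..n} \<Longrightarrow> idem n D j \<in> (Pcar n D j :: ('k::field) pel set set)"
  by (auto simp: Pcar_def idem_closed nf_idem path_el_apply)

lemma Pcar_eq:
  assumes "j \<in> {1..n}"
  shows "Pcar n D j = {a \<otimes>\<^bsub>A\<^esub> idem n D j | a. a \<in> carrier (A :: ('k::field) pel set ring)}"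
proof
  show "Pcar n D j \<subseteq> {a \<otimes>\<^bsub>A\<^esub> idem n D j | a. a \<in> carrier (A :: 'k pel set ring)}"
    using Pcar_mult_idem[OF _ assms] Pcar_subset by force
  show "{a \<otimes>\<^bsub>A\<^esub> idem n D j | a. a \<in> carrier (A :: 'k pel set ring)} \<subseteq> Pcar n D j"
    using ring.ring_simprules(5)[OF ring_A _ idem_closed[OF assms]]
    by (auto simp: Pcar_def nf_mult_idem[OF _ assms])
qed

lemma Pcar_left_ideal: "left_ideal A (Pcar n D j :: ('k::field) pel set set)"
proof -
  interpret A: ring "A :: 'k pel set ring" by (rule ring_A)
  have "additive_subgroup (Pcar n D j) (A :: 'k pel set ring)"
    by (rule A.additive_subgroup_closedI) (auto simp: Pcar_def nf_zero nf_add nf_minus)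
  moreover have "a \<otimes>\<^bsub>A\<^esub> z \<in> Pcar n D j" if "a \<in> carrier A" "z \<in> Pcar n D j" for a z :: "'k pel set"
  proof -
    have "pmul n (nf n D a) (nf n D z) (s, L) = 0" if "s \<noteq> j" for s L
      using \<open>z \<in> Pcar n D j\<close> that unfolding pmul_apply by (auto simp: Pcar_def intro!: sum.neutral)
    then show ?thesis using that by (auto simp: Pcar_def nf_mult trunc_def)
  qed
  ultimately show ?thesis by (simp add: left_ideal_def)
qed

lemma Pcar_Jpow_left_ideal: "left_ideal A (Pcar n D j \<inter> Jpow n D t :: ('k::field) pel set set)"
  by (intro left_ideal_Int ring_A Pcar_left_ideal Jpow_left_ideal)

lemma Pmod_eq: "j \<in> {1..n} \<Longrightarrow> Pmod n D j = sub_module (reg_mod A) (Pcar n D j :: ('k::field) pel set set)"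
  by (simp add: Pmod_def Pcar_eq)

lemma Pmod_simps:
  "j \<in> {1..n} \<Longrightarrow> carrier (Pmod n D j) = (Pcar n D j :: ('k::field) pel set set)"
  "\<zero>\<^bsub>Pmod n D j\<^esub> = (\<zero>\<^bsub>A\<^esub> :: ('k::field) pel set)"
  "x \<oplus>\<^bsub>Pmod n D j\<^esub> y = x \<oplus>\<^bsub>A\<^esub> (y :: ('k::field) pel set)"
  "smult (Pmod n D j) a x = a \<otimes>\<^bsub>A\<^esub> (x :: ('k::field) pel set)"
  by (simp_all add: Pmod_eq sub_module_def) (simp_all add: Pmod_def sub_module_def)

lemma left_module_Pmod: "j \<in> {1..n} \<Longrightarrow> left_module A (Pmod n D j :: (('k::field) pel set, 'k pel set) module)"
  by (simp add: Pmod_eq left_module_left_ideal ring_A Pcar_left_ideal)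

lemma submod_Pcar_Jpow:
  "j \<in> {1..n} \<Longrightarrow> submod A (Pmod n D j) (Pcar n D j \<inter> Jpow n D t :: ('k::field) pel set set)"
  unfolding Pmod_eq
  by (intro left_mod.submod_sub_module left_mod.intro left_module_reg_mod ring_A
      submod_reg_mod Pcar_left_ideal Pcar_Jpow_left_ideal) auto

lemma rad_pow_Pmod:
  assumes j: "j \<in> {1..n}"
  shows "rad_pow A (Pmod n D j) t = Pcar n D j \<inter> (Jpow n D t :: ('k::field) pel set set)"
proof (induction t)
  case 0
  then show ?case using j Pcar_subset by (auto simp: Pmod_simps Jpow_0)
next
  case (Suc t)
  define G where "G = {smult (Pmod n D j) a x | a x.
    a \<in> jac (A :: 'k pel set ring) \<and> x \<in> rad_pow A (Pmod n D j) t}"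
  have G: "G = {a \<otimes>\<^bsub>A\<^esub> x | a x. a \<in> Jpow n D 1 \<and> x \<in> Pcar n D j \<inter> Jpow n D t}"
    by (simp add: G_def Suc jac_A Pmod_simps)
  have S: "submod A (Pmod n D j) (Pcar n D j \<inter> Jpow n D (Suc t))"
    by (rule submod_Pcar_Jpow[OF j])
  have G_sub: "G \<subseteq> Pcar n D j \<inter> Jpow n D (Suc t)"
    using Pcar_left_ideal Jpow_mult[of _ 1 _ t] Jpow_subset
    by (fastforce simp: G left_ideal_def)
  have sub_G: "Pcar n D j \<inter> Jpow n D (Suc t) \<subseteq> G"
    \<comment> \<open>each element is a single product y (path of length t from j) with y \<in> J\<close>
  proof
    fix z :: "'k pel set" assume "z \<in> Pcar n D j \<inter> Jpow n D (Suc t)"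
    then obtain y where "y \<in> Jpow n D 1" "y \<otimes>\<^bsub>A\<^esub> cls n D (path_el j t) = z"
      using factor_through_path[OF j, of z t 1] by auto
    then show "z \<in> G" unfolding G using cls_path_in_Pcar_Jpow[OF j] by blast
  qed
  have "rad_pow A (Pmod n D j) (Suc t) = \<Inter>{N. submod A (Pmod n D j) N \<and> G \<subseteq> N}"
    by (simp add: G_def submod_gen_def)
  then show ?case using S G_sub sub_G by blast
qed

lemma Pcar_Jpow_eq_zero_iff:
  assumes j: "j \<in> {1..n}"
  shows "Pcar n D j \<inter> Jpow n D t = {\<zero>\<^bsub>A\<^esub> :: ('k::field) pel set} \<longleftrightarrow> n + rel_dist n D j \<le> t"
proof
  assume zero: "Pcar n D j \<inter> Jpow n D t = {\<zero>\<^bsub>A\<^esub> :: 'k pel set}"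
  show "n + rel_dist n D j \<le> t"
  proof (rule ccontr)
    assume "\<not> n + rel_dist n D j \<le> t"
    define L where "L = n + rel_dist n D j - 1"
    have "t \<le> L" "\<not> vanishes n D (j, L)"
      using vanishes_iff[OF j] n_pos \<open>\<not> n + rel_dist n D j \<le> t\<close> by (auto simp: L_def)
    then have "cls n D (path_el j L) \<in> Pcar n D j \<inter> (Jpow n D t :: 'k pel set set)"
      "nf n D (cls n D (path_el j L) :: 'k pel set) (j, L) = 1"
      using cls_path_in_Pcar_Jpow[OF j, of L] Jpow_antimono[of t L]
      by (auto simp: nf_cls[OF pcar_closed(7)[OF j]] trunc_def path_el_apply)
    then show False using zero by (auto simp: nf_zero)
  qed
next
  assume le: "n + rel_dist n D j \<le> t"
  have "nf n D z = (\<lambda>_. 0)" if "z \<in> Pcar n D j \<inter> Jpow n D t" for z :: "'k pel set"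
  proof
    fix p :: "nat \<times> nat"
    obtain s L where p: "p = (s, L)" by (cases p)
    show "nf n D z p = 0"
    proof (rule ccontr)
      assume nz: "nf n D z p \<noteq> 0"
      then have "s = j" "t \<le> L" using that by (auto simp: p Pcar_def Jpow_def not_less[symmetric])
      then show False using nf_not_vanishes[OF nz] vanishes_iff[OF j] le by (simp add: p)
    qed
  qed
  then show "Pcar n D j \<inter> Jpow n D t = {\<zero>\<^bsub>A\<^esub> :: 'k pel set}"
    using nf_eq_zero_iff Pcar_subset ring.ring_simprules(2)[OF ring_A]
    by (auto simp: Pcar_def Jpow_def nf_zero)
qed

lemma loewy_Pmod:
  assumes j: "j \<in> {1..n}"
  shows "loewy A (Pmod n D j :: (('k::field) pel set, 'k pel set) module) = n + rel_dist n D j"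
  unfolding loewy_def rad_pow_Pmod[OF j] Pmod_simps Pcar_Jpow_eq_zero_iff[OF j]
  using n_pos by (intro Least_equality) auto

lemma rel_dist_shift:
  assumes i: "i \<in> {1..n}" and t: "t < rel_dist n D i"
  shows "rel_dist n D ((sig n ^^ t) i) = rel_dist n D i - t"
  unfolding rel_dist_def[of n D "(sig n ^^ t) i"]
proof (rule Least_equality)
  show "(sig n ^^ (rel_dist n D i - t)) ((sig n ^^ t) i) \<in> D"
    using rel_dist(1)[OF i] t by (simp add: funpow_diff)
  fix r assume "(sig n ^^ r) ((sig n ^^ t) i) \<in> D"
  then have "rel_dist n D i \<le> r + t"
    unfolding rel_dist_def by (intro Least_le) (simp add: funpow_add)
  then show "rel_dist n D i - t \<le> r" by simp
qed

lemma loewy_Pmod_shift: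
  assumes i: "i \<in> {1..n}" and k: "n \<le> k" "k < n + rel_dist n D i"
  shows "loewy A (Pmod n D ((sig n ^^ k) i) :: (('k::field) pel set, 'k pel set) module)
    = n + rel_dist n D i - (k - n)"
proof -
  have "(sig n ^^ k) i = (sig n ^^ (k - n)) ((sig n ^^ n) i)"
    using k(1) by (simp add: funpow_diff)
  then have "(sig n ^^ k) i = (sig n ^^ (k - n)) i" by (simp add: sig_pow_n[OF i])
  moreover have "rel_dist n D ((sig n ^^ (k - n)) i) = rel_dist n D i - (k - n)"
    using k by (intro rel_dist_shift[OF i]) simp
  ultimately show ?thesis
    using loewy_Pmod[OF sig_pow_in[OF i], of "k - n"] k by (simp add: ac_simps)
qed

lemma loewy_less:
  assumes "left_module A (M :: (('k::field) pel set, 'm) module)"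
  shows "0 < loewy A M" "loewy A M < 2 * n"
proof -
  have "rad_pow A M (2 * n - 1) = {\<zero>\<^bsub>M\<^esub>}"
    by (rule left_mod.rad_pow_eq_zero_if_filtration[OF left_mod.intro[OF assms], where F = "Jpow n D"])
       (use Jpow_eq_zero in \<open>simp_all add: Jpow_subset Jpow_0 jac_A Jpow_mult\<close>)
  moreover have "1 \<le> 2 * n - 1" using n_pos by linarith
  ultimately show "0 < loewy A M" "loewy A M < 2 * n"
    using loewy_le[of "2 * n - 1" A M] by auto
qed

lemma mult_path_in_Pcar_Jpow:
  assumes i: "i \<in> {1..n}" and y: "y \<in> Pcar n D ((sig n ^^ k) i)"
  shows "y \<otimes>\<^bsub>A\<^esub> cls n D (path_el i k) \<in> Pcar n D i \<inter> (Jpow n D k :: ('k::field) pel set set)"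
proof -
  have "y \<in> carrier A" using y by (simp add: Pcar_def)
  then show ?thesis
    using ring.ring_simprules(5)[OF ring_A _ cls_closed[OF pcar_closed(7)[OF i]]]
    by (auto simp: Pcar_def Jpow_def nf_mult_cls_path[OF _ i])
qed

lemma mult_path_eq_zero_iff:
  assumes i: "i \<in> {1..n}" and y: "y \<in> Pcar n D ((sig n ^^ k) i)"
  shows "y \<otimes>\<^bsub>A\<^esub> cls n D (path_el i k) = \<zero>\<^bsub>A\<^esub> \<longleftrightarrow> y \<in> (Jpow n D (n + rel_dist n D i - k) :: ('k::field) pel set set)"
proof -
  have yc: "y \<in> carrier A" using y by (simp add: Pcar_def)
  have "y \<otimes>\<^bsub>A\<^esub> cls n D (path_el i k) = \<zero>\<^bsub>A\<^esub> \<longleftrightarrow>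
      (\<forall>L. k \<le> L \<and> L < n + rel_dist n D i \<longrightarrow> nf n D y ((sig n ^^ k) i, L - k) = 0)"
    using nf_eq_zero_iff[OF ring.ring_simprules(5)[OF ring_A yc cls_closed[OF pcar_closed(7)[OF i]]]]
    by (auto simp: fun_eq_iff nf_mult_cls_path[OF yc i] vanishes_iff[OF i] not_le)
  also have "\<dots> \<longleftrightarrow> (\<forall>M. M < n + rel_dist n D i - k \<longrightarrow> nf n D y ((sig n ^^ k) i, M) = 0)"
  proof (intro iffI allI impI)
    fix M assume "\<forall>L. k \<le> L \<and> L < n + rel_dist n D i \<longrightarrow> nf n D y ((sig n ^^ k) i, L - k) = 0"
      and "M < n + rel_dist n D i - k"
    then show "nf n D y ((sig n ^^ k) i, M) = 0" by (metis add_diff_cancel_right' le_add2 less_diff_conv)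
  qed auto
  also have "\<dots> \<longleftrightarrow> y \<in> Jpow n D (n + rel_dist n D i - k)"
    using y by (auto simp: Jpow_def Pcar_def) (metis prod.inject)
  finally show ?thesis .
qed

end

section \<open>Syzygies of the modules L(i,k)\<close>

(* y is a preimage of the top of L(i,k) = P_i / J^k P_i; x |-> x y is shown to be an isomorphism
   from P_i onto the projective cover P. *)
locale cyclic_nakayama_cover = cyclic_nakayama +
  fixes i k :: nat and P :: "(('k::field) pel set, 'p) module" and p :: "'p \<Rightarrow> 'k pel set set"
    and y :: 'p
  assumes i: "i \<in> {1..n}" and k_pos: "0 < k" and k_less: "k < n + rel_dist n D i"
    and cover: "proj_cover A P (Lmod n D i k) p"
    and y: "y \<in> carrier P" "p y = (Pcar n D i \<inter> Jpow n D k) +>\<^bsub>Pmod n D i\<^esub> idem n D i"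
begin

abbreviation N :: "'k pel set set" where "N \<equiv> Pcar n D i \<inter> Jpow n D k"

abbreviation L :: "('k pel set, 'k pel set set) module" where "L \<equiv> Lmod n D i k"

lemma Pi_carrier: "carrier (Pmod n D i) = Pcar n D i"
  by (rule Pmod_simps(1)[OF i])

lemma L_eq: "L = quot_mod (Pmod n D i) N"
  by (simp add: Lmod_def rad_pow_Pmod[OF i])

sublocale P: left_mod A P
  using cover by (intro left_mod.intro) (simp add: proj_cover_def projective_def)

sublocale Pi: left_mod A "Pmod n D i"
  by (rule left_mod.intro[OF left_module_Pmod[OF i]])

lemma p_hom: "mod_hom A P L p" and p_onto: "p ` carrier P = carrier L"
  and superfluous_ker: "superfluous A P (mod_ker P L p)"
  using cover by (simp_all add: proj_cover_def)

lemma p_additive: "abelian_group_hom P L p"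
  using cover p_hom
  by (intro mod_hom_additive P.M.abelian_group_axioms) (simp_all add: proj_cover_def left_module_def)

lemma L_carrier: "carrier L = (\<lambda>x. N +>\<^bsub>Pmod n D i\<^esub> x) ` Pcar n D i"
  by (auto simp: L_eq quot_mod_def A_RCOSETS_def' Pi_carrier Pmod_simps(2-4))

lemma L_zero: "\<zero>\<^bsub>L\<^esub> = N"
  by (simp add: L_eq quot_mod_simps)

lemma L_smult: "a \<in> carrier A \<Longrightarrow> x \<in> Pcar n D i \<Longrightarrow>
    smult L a (N +>\<^bsub>Pmod n D i\<^esub> x) = N +>\<^bsub>Pmod n D i\<^esub> (a \<otimes>\<^bsub>A\<^esub> x)"
  using Pi.quot_mod_smult[OF submod_Pcar_Jpow[OF i]] by (simp add: L_eq Pi_carrier Pmod_simps(2-4))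

lemma coset_eq_N_iff: "x \<in> Pcar n D i \<Longrightarrow> N +>\<^bsub>Pmod n D i\<^esub> x = N \<longleftrightarrow> x \<in> N"
  by (rule Pi.coset_eq_zero_iff[OF submod_Pcar_Jpow[OF i], unfolded Pi_carrier])

abbreviation cover_map :: "'k pel set \<Rightarrow> 'p" where "cover_map x \<equiv> smult P x y"

lemma cover_map_closed: "x \<in> Pcar n D i \<Longrightarrow> cover_map x \<in> carrier P"
  by (simp add: y(1) Pcar_carrier)

lemma cover_map_hom: "mod_hom A (Pmod n D i) P cover_map"
  using y(1) by (auto simp: mod_hom_def Pi_carrier Pmod_simps(2-4) P.smult_l_distr P.smult_assoc
      Pcar_carrier)

lemma p_cover_map:
  assumes x: "x \<in> Pcar n D i" shows "p (cover_map x) = N +>\<^bsub>Pmod n D i\<^esub> x"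
proof -
  have xc: "x \<in> carrier A" using x Pcar_subset by blast
  have "p (cover_map x) = smult L x (p y)" using p_hom y(1) xc by (simp add: mod_hom_def)
  also have "\<dots> = N +>\<^bsub>Pmod n D i\<^esub> (x \<otimes>\<^bsub>A\<^esub> idem n D i)"
    by (simp add: y(2) L_smult[OF xc idem_in_Pcar[OF i]])
  finally show ?thesis by (simp add: Pcar_mult_idem[OF x i])
qed

lemma cover_map_onto: "cover_map ` Pcar n D i = carrier P"
proof -
  interpret p: abelian_group_hom P L p by (rule p_additive)
  define K where "K = mod_ker P L p"
  have "submod A P (cover_map ` Pcar n D i)"
    using Pi.submod_image[OF P.left_module cover_map_hom] by (simp add: Pi_carrier)
  moreover have "set_add P (cover_map ` Pcar n D i) K = carrier P"
  proof
    show "set_add P (cover_map ` Pcar n D i) K \<subseteq> carrier P"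
      using cover_map_closed by (auto simp: set_add_def' K_def mod_ker_def)
    show "carrier P \<subseteq> set_add P (cover_map ` Pcar n D i) K"
    proof
      fix z assume z: "z \<in> carrier P"
      then have "p z \<in> (\<lambda>x. N +>\<^bsub>Pmod n D i\<^esub> x) ` Pcar n D i"
        using p_onto L_carrier by blast
      then obtain x where x: "x \<in> Pcar n D i" "p z = N +>\<^bsub>Pmod n D i\<^esub> x" by blast
      define b where "b = \<ominus>\<^bsub>P\<^esub> cover_map x \<oplus>\<^bsub>P\<^esub> z"
      have b: "b \<in> carrier P" using z cover_map_closed[OF x(1)] by (simp add: b_def)
      have "p b = \<ominus>\<^bsub>L\<^esub> p (cover_map x) \<oplus>\<^bsub>L\<^esub> p z"
        using z cover_map_closed[OF x(1)] by (simp add: b_def)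
      also have "\<dots> = \<zero>\<^bsub>L\<^esub>"
        using x(2) p_cover_map[OF x(1)] p.hom_closed[OF z] by (simp add: p.H.l_neg)
      finally have "b \<in> K" using b by (simp add: K_def mod_ker_def)
      moreover have "z = cover_map x \<oplus>\<^bsub>P\<^esub> b"
        using z cover_map_closed[OF x(1)] by (simp add: b_def P.M.r_neg2)
      ultimately show "z \<in> set_add P (cover_map ` Pcar n D i) K"
        using x(1) unfolding set_add_def' by blast
    qed
  qed
  ultimately show ?thesis
    using superfluous_ker by (simp add: superfluous_def K_def)
qed

lemma cover_map_section:
  obtains h where "mod_hom A P (Pmod n D i :: ('k pel set, 'k pel set) module) h" "\<And>z. z \<in> carrier P \<Longrightarrow> cover_map (h z) = z"
proof -
  have "projective A P" using cover by (simp add: proj_cover_def)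
  then show ?thesis
    using projective_section_left_ideal[OF _ Pcar_left_ideal] cover_map_hom cover_map_onto that
    unfolding Pmod_eq[OF i] by blast
qed

lemma cover_map_eq_zero_imp_Jpow:
  assumes x: "x \<in> Pcar n D i" and "cover_map x = \<zero>\<^bsub>P\<^esub>"
  shows "x \<in> Jpow n D 1"
proof -
  have "N +>\<^bsub>Pmod n D i\<^esub> x = N"
    using p_cover_map[OF x] assms(2) p_additive by (simp add: L_zero abelian_group_hom.hom_zero)
  then show ?thesis using coset_eq_N_iff[OF x] Jpow_antimono[of 1 k] k_pos by auto
qed

(* With a section h and t = h (e_i y) one gets h (x y) = x t; then j = e_i - t satisfies
   j y = 0, so j lies in J, and j t = 0 makes j idempotent, hence j = 0. *)
lemma cover_map_inj: "inj_on cover_map (Pcar n D i)"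
proof -
  interpret cm: abelian_group_hom "Pmod n D i" P cover_map
    by (rule mod_hom_additive[OF Pi.M.abelian_group_axioms P.M.abelian_group_axioms cover_map_hom])
  obtain h where h_hom: "mod_hom A P (Pmod n D i :: ('k pel set, 'k pel set) module) h"
    and h_section: "\<And>z. z \<in> carrier P \<Longrightarrow> cover_map (h z) = z"
    by (rule cover_map_section) blast
  interpret h: abelian_group_hom P "Pmod n D i" h
    by (rule mod_hom_additive[OF P.M.abelian_group_axioms Pi.M.abelian_group_axioms h_hom])
  interpret Pc: additive_subgroup "Pcar n D i :: 'k pel set set" A
    by (rule conjunct1[OF Pcar_left_ideal[unfolded left_ideal_def]])
  define e where "e = (idem n D i :: 'k pel set)"
  have e: "e \<in> Pcar n D i" unfolding e_def by (rule idem_in_Pcar[OF i])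
  define t where "t = h (cover_map e)"
  have t: "t \<in> Pcar n D i"
    using h.hom_closed[OF cover_map_closed[OF e]] by (simp add: t_def Pi_carrier)
  have h_cover_map: "h (cover_map x) = x \<otimes>\<^bsub>A\<^esub> t" if x: "x \<in> Pcar n D i" for x
  proof -
    have "cover_map x = smult P x (cover_map e)"
      using Pcar_mult_idem[OF x i] x e y(1) by (simp add: e_def Pcar_carrier flip: P.smult_assoc)
    then show ?thesis
      using h_hom x e cover_map_closed by (simp add: t_def mod_hom_def Pmod_simps(4) Pcar_carrier)
  qed
  define j where "j = e \<ominus>\<^bsub>A\<^esub> t"
  have j: "j \<in> Pcar n D i" using e t by (simp add: j_def a_minus_def)
  have "j \<oplus>\<^bsub>A\<^esub> t = e"
    using e t by (simp add: j_def a_minus_def P.R.a_assoc P.R.l_neg Pcar_carrier)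
  then have "cover_map j \<oplus>\<^bsub>P\<^esub> cover_map e = cover_map e"
    using j t cm.hom_add[of j t] h_section[OF cover_map_closed[OF e]]
    by (simp add: t_def Pi_carrier Pmod_simps(3))
  then have j0: "cover_map j = \<zero>\<^bsub>P\<^esub>"
    using cover_map_closed[OF j] cover_map_closed[OF e] by (simp add: P.M.add.r_cancel_one')
  have "j \<otimes>\<^bsub>A\<^esub> j = j"
  proof -
    have "j \<otimes>\<^bsub>A\<^esub> t = \<zero>\<^bsub>A\<^esub>"
      using h_cover_map[OF j] j0 h.hom_zero by (simp add: Pmod_simps(2))
    moreover have "t = e \<ominus>\<^bsub>A\<^esub> j"
      using e t by (simp add: j_def a_minus_def P.R.minus_add P.R.a_assoc[symmetric] P.R.r_neg Pcar_carrier)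
    ultimately have "j \<otimes>\<^bsub>A\<^esub> e \<ominus>\<^bsub>A\<^esub> j \<otimes>\<^bsub>A\<^esub> j = \<zero>\<^bsub>A\<^esub>"
      using e j by (simp add: a_minus_def P.R.r_distr P.R.r_minus Pcar_carrier)
    then show ?thesis
      using Pcar_mult_idem[OF j i] Pcar_carrier[OF j] by (simp add: e_def a_minus_def P.R.add.inv_solve_right')
  qed
  then have "j = \<zero>\<^bsub>A\<^esub>"
    using P.R.nilpotent_idempotent_eq_zero Jpow_nilpotent cover_map_eq_zero_imp_Jpow[OF j j0]
      Pcar_carrier[OF j] by blast
  then have "t = e"
    using Pcar_carrier[OF e] Pcar_carrier[OF t] by (simp add: j_def a_minus_def P.R.add.inv_solve_right')
  then have "h (cover_map x) = x" if "x \<in> Pcar n D i" for x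
    using h_cover_map[OF that] Pcar_mult_idem[OF that i] by (simp add: e_def)
  then show ?thesis by (rule inj_on_inverseI)
qed

lemma ker_p_eq: "mod_ker P L p = cover_map ` N"
proof -
  have "mod_ker P L p = {z \<in> carrier P. p z = N}" by (simp add: mod_ker_def L_zero)
  also have "\<dots> = cover_map ` N"
  proof
    show "{z \<in> carrier P. p z = N} \<subseteq> cover_map ` N"
    proof
      fix z assume z: "z \<in> {z \<in> carrier P. p z = N}"
      then obtain x where "x \<in> Pcar n D i" "z = cover_map x" using cover_map_onto by blast
      then show "z \<in> cover_map ` N" using z p_cover_map coset_eq_N_iff by auto
    qed
    show "cover_map ` N \<subseteq> {z \<in> carrier P. p z = N}"
      using p_cover_map coset_eq_N_iff cover_map_closed by auto
  qed
  finally show ?thesis .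
qed

lemma cover_map_eq_zero_iff:
  assumes x: "x \<in> Pcar n D i" shows "cover_map x = \<zero>\<^bsub>P\<^esub> \<longleftrightarrow> x = \<zero>\<^bsub>A\<^esub>"
proof -
  interpret cm: abelian_group_hom "Pmod n D i" P cover_map
    by (rule mod_hom_additive[OF Pi.M.abelian_group_axioms P.M.abelian_group_axioms cover_map_hom])
  have cover_map_zero: "cover_map \<zero>\<^bsub>A\<^esub> = \<zero>\<^bsub>P\<^esub>" using cm.hom_zero by (simp add: Pmod_simps(2))
  have z0: "\<zero>\<^bsub>A\<^esub> \<in> Pcar n D i" using Pi.M.zero_closed by (simp add: Pi_carrier Pmod_simps(2))
  show ?thesis
  proof
    assume "cover_map x = \<zero>\<^bsub>P\<^esub>"
    then have "cover_map x = cover_map \<zero>\<^bsub>A\<^esub>" using cover_map_zero by simp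
    then show "x = \<zero>\<^bsub>A\<^esub>" using inj_onD[OF cover_map_inj _ x z0] by blast
  qed (simp add: cover_map_zero)
qed

abbreviation i_shift :: nat where "i_shift \<equiv> (sig n ^^ k) i"

abbreviation path_ik :: "'k pel set" where "path_ik \<equiv> cls n D (path_el i k)"

abbreviation shift_map :: "'k pel set \<Rightarrow> 'p" where "shift_map x \<equiv> cover_map (x \<otimes>\<^bsub>A\<^esub> path_ik)"

lemma i_shift: "i_shift \<in> {1..n}"
  by (rule sig_pow_in[OF i])

lemma mult_path_ik: "x \<in> Pcar n D i_shift \<Longrightarrow> x \<otimes>\<^bsub>A\<^esub> path_ik \<in> N"
  by (rule mult_path_in_Pcar_Jpow[OF i])

lemma submod_ker_p: "submod A P (mod_ker P L p)"
  using cover by (intro P.submod_mod_ker p_hom) (simp add: proj_cover_def)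

lemma shift_map_hom: "mod_hom A (Pmod n D i_shift) (sub_module P (mod_ker P L p)) shift_map"
  unfolding mod_hom_def Pmod_simps(1)[OF i_shift] Pmod_simps(3,4)
proof (intro conjI ballI)
  show "shift_map \<in> Pcar n D i_shift \<rightarrow> carrier (sub_module P (mod_ker P L p))"
    using mult_path_ik by (auto simp: sub_module_def ker_p_eq)
next
  fix x x' :: "'k pel set" assume x: "x \<in> Pcar n D i_shift" and x': "x' \<in> Pcar n D i_shift"
  have "(x \<oplus>\<^bsub>A\<^esub> x') \<otimes>\<^bsub>A\<^esub> path_ik = x \<otimes>\<^bsub>A\<^esub> path_ik \<oplus>\<^bsub>A\<^esub> x' \<otimes>\<^bsub>A\<^esub> path_ik"
    using Pcar_carrier[OF x] Pcar_carrier[OF x'] cls_closed[OF pcar_closed(7)[OF i]]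
    by (rule P.R.l_distr)
  then show "shift_map (x \<oplus>\<^bsub>A\<^esub> x') = shift_map x \<oplus>\<^bsub>sub_module P (mod_ker P L p)\<^esub> shift_map x'"
    using cover_map_hom mult_path_ik[OF x] mult_path_ik[OF x']
    by (simp add: mod_hom_def Pi_carrier Pmod_simps(3) sub_module_def)
next
  fix a x :: "'k pel set" assume a: "a \<in> carrier A" and x: "x \<in> Pcar n D i_shift"
  have "(a \<otimes>\<^bsub>A\<^esub> x) \<otimes>\<^bsub>A\<^esub> path_ik = a \<otimes>\<^bsub>A\<^esub> (x \<otimes>\<^bsub>A\<^esub> path_ik)"
    using a Pcar_carrier[OF x] cls_closed[OF pcar_closed(7)[OF i]] by (rule P.R.m_assoc)
  then show "shift_map (a \<otimes>\<^bsub>A\<^esub> x) = smult (sub_module P (mod_ker P L p)) a (shift_map x)"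
    using cover_map_hom a mult_path_ik[OF x]
    by (simp add: mod_hom_def Pi_carrier Pmod_simps(4) sub_module_def)
qed

lemma shift_map_onto: "shift_map ` carrier (Pmod n D i_shift) = carrier (sub_module P (mod_ker P L p))"
proof
  show "shift_map ` carrier (Pmod n D i_shift) \<subseteq> carrier (sub_module P (mod_ker P L p))"
    using shift_map_hom by (auto simp: mod_hom_def)
  show "carrier (sub_module P (mod_ker P L p)) \<subseteq> shift_map ` carrier (Pmod n D i_shift)"
  proof
    fix z assume "z \<in> carrier (sub_module P (mod_ker P L p))"
    then have "z \<in> cover_map ` N" by (simp add: sub_module_def ker_p_eq)
    then obtain x where x: "x \<in> N" "z = cover_map x" by blast
    moreover obtain u where "u \<in> Pcar n D i_shift" "u \<otimes>\<^bsub>A\<^esub> path_ik = x"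
      using factor_through_path[OF i, of x k 0] x(1) by auto
    ultimately show "z \<in> shift_map ` carrier (Pmod n D i_shift)"
      by (auto simp: Pmod_simps(1)[OF i_shift])
  qed
qed

lemma mod_ker_shift_map:
  "mod_ker (Pmod n D i_shift) (sub_module P (mod_ker P L p)) shift_map
    = Pcar n D i_shift \<inter> Jpow n D (n + rel_dist n D i - k)"
proof -
  have "shift_map x = \<zero>\<^bsub>P\<^esub> \<longleftrightarrow> x \<in> Jpow n D (n + rel_dist n D i - k)" if x: "x \<in> Pcar n D i_shift" for x
    using cover_map_eq_zero_iff[OF IntD1[OF mult_path_ik[OF x]]] mult_path_eq_zero_iff[OF i x] by simp
  then show ?thesis by (auto simp: mod_ker_def sub_module_def Pmod_simps(1)[OF i_shift])
qed

theorem Omega_L: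
  "mod_iso A (sub_module P (mod_ker P L p)) (Lmod n D i_shift (n + rel_dist n D i - k))"
proof -
  have "mod_iso A (sub_module P (mod_ker P L p))
      (quot_mod (Pmod n D i_shift) (mod_ker (Pmod n D i_shift) (sub_module P (mod_ker P L p)) shift_map))"
    by (rule mod_iso_quot_mod_ker[OF left_module_Pmod[OF i_shift]
          P.left_module_sub_module[OF submod_ker_p] shift_map_hom shift_map_onto])
  moreover have "(Lmod n D i_shift (n + rel_dist n D i - k) :: ('k pel set, 'k pel set set) module)
      = quot_mod (Pmod n D i_shift) (Pcar n D i_shift \<inter> Jpow n D (n + rel_dist n D i - k))"
    by (simp add: Lmod_def rad_pow_Pmod[OF i_shift])
  ultimately show ?thesis by (simp add: mod_ker_shift_map)
qed
end

lemma (in cyclic_nakayama) Omega_Lmod: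
  fixes P :: "(('k::field) pel set, 'p) module"
  assumes i: "i \<in> {1..n}" and k: "0 < k" "k < n + rel_dist n D i"
    and cover: "proj_cover A P (Lmod n D i k) p"
  shows "mod_iso A (sub_module P (mod_ker P (Lmod n D i k) p))
    (Lmod n D ((sig n ^^ k) i) (n + rel_dist n D i - k))"
proof -
  have "(Pcar n D i \<inter> Jpow n D k) +>\<^bsub>Pmod n D i\<^esub> idem n D i
      \<in> carrier (Lmod n D i k :: ('k pel set, 'k pel set set) module)"
    using idem_in_Pcar[OF i]
    by (auto simp: Lmod_def rad_pow_Pmod[OF i] quot_mod_simps A_RCOSETS_def' Pmod_simps(1)[OF i])
  then obtain y where "y \<in> carrier P" "p y = (Pcar n D i \<inter> Jpow n D k) +>\<^bsub>Pmod n D i\<^esub> idem n D i"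
    using cover unfolding proj_cover_def by (metis imageE)
  then interpret cyclic_nakayama_cover n D i k P p y
    using i k cover by unfold_locales
  show ?thesis by (rule Omega_L)
qed

theorem lemma4p9:
  fixes n :: nat and Delta :: "nat set" and i :: nat
  assumes "2 \<le> n" and "Delta \<subseteq> {1..n}" and "Delta \<noteq> {}" and "i \<in> {1..n}"
  shows
    "(\<forall>k (M :: (('k::field) pel set, 'm) module).
        left_module (Aalg n Delta) M \<and> fin_gen (Aalg n Delta) M \<and>
        indecomp (Aalg n Delta) M \<and> has_top n Delta i M \<and> loewy (Aalg n Delta) M = k
        \<longrightarrow> 0 < k \<and> k < 2 * n)
   \<and> loewy (Aalg n Delta) (Pmod n Delta i :: ('k pel set, 'k pel set) module)
        = n + (LEAST r. (sig n ^^ r) i \<in> Delta)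
   \<and> n \<le> loewy (Aalg n Delta) (Pmod n Delta i :: ('k pel set, 'k pel set) module)
   \<and> loewy (Aalg n Delta) (Pmod n Delta i :: ('k pel set, 'k pel set) module) < 2 * n
   \<and> (\<forall>k. n \<le> k \<and> k < loewy (Aalg n Delta) (Pmod n Delta i :: ('k pel set, 'k pel set) module)
        \<longrightarrow> loewy (Aalg n Delta) (Pmod n Delta ((sig n ^^ k) i) :: ('k pel set, 'k pel set) module)
            = loewy (Aalg n Delta) (Pmod n Delta i :: ('k pel set, 'k pel set) module) - (k - n))
   \<and> (\<forall>k (P :: ('k pel set, 'p) module) p.
        0 < k \<and> k < loewy (Aalg n Delta) (Pmod n Delta i :: ('k pel set, 'k pel set) module) \<and>
        proj_cover (Aalg n Delta) P (Lmod n Delta i k) p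
        \<longrightarrow> mod_iso (Aalg n Delta) (sub_module P (mod_ker P (Lmod n Delta i k) p))
              (Lmod n Delta ((sig n ^^ k) i)
                 (loewy (Aalg n Delta) (Pmod n Delta i :: ('k pel set, 'k pel set) module) - k)))"
proof -
  interpret cyclic_nakayama n Delta
    using assms by unfold_locales auto
  have loewy_P: "loewy (Aalg n Delta) (Pmod n Delta i :: ('k pel set, 'k pel set) module)
      = n + rel_dist n Delta i"
    by (rule loewy_Pmod[OF assms(4)])
  show ?thesis
    unfolding loewy_P
    using loewy_less loewy_Pmod_shift[OF assms(4)] Omega_Lmod[OF assms(4)] rel_dist(2)[OF assms(4)]
    by (auto simp: rel_dist_def)
qed

end
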